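(* Assume Condition 1 below. Suppose $\|\hat Q_{-k}-Q\|_{L^2(P)}\to0$ in probability for each $k\in\{1,\dots,K\}$. Then $\|\hat Q-Q\|_{L^2(\mathbb P_n)}=o_P(1)$ and $\frac1n\sum_{i=1}^n\hat Q_iZ_i/\hat e(X_i)=\mathbb E[Q(X)]+o_P(1)$.
   Context: $(X_i,Y_i,Z_i)$, $i\le n$, i.i.d. from $P$; $e(x)=P(Z=1\mid X=x)$; $Q(x)$ is the conditional $\tau$-quantile of $Y$ given $X=x,Z=1$. Cross-fitting: the indices are partitioned into a fixed number $K$ of folds $\mathcal F_1,\dots,\mathcal F_K$ of approximately equal size; $\hat Q_{-k}$ is a function $\mathcal X\to\mathbb R$ estimated using only observations not in $\mathcal F_k$; $\hat Q_i=\hat Q_{-k}(X_i)$ for $i\in\mathcal F_k$. $\|\hat Q_{-k}-Q\|_{L^2(P)}^2=\int(\hat Q_{-k}(x)-Q(x))^2\,dP_X(x)$ (with $\hat Q_{-k}$ held fixed), and $\|\hat Q-Q\|_{L^2(\mathbb P_n)}^2=\frac1n\sum_i(\hat Q_i-Q(X_i))^2$. Condition 1: $\varepsilon\le e(X)\le1-\varepsilon$ a.s. for some $\varepsilon>0$, the propensity estimate $\hat e$ (computed from $\{(X_i,Z_i)\}$) satisfies $\sup_x|\hat e(x)-e(x)|\to0$ in probability, and $\mathrm{Var}(Y)<\infty$. *)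

theory Defs
  imports "HOL-Probability.Probability"
begin

definition gen_sigma :: "'a measure \<Rightarrow> (nat \<Rightarrow> 'a \<Rightarrow> 'b) \<Rightarrow> 'b measure \<Rightarrow> nat set \<Rightarrow> 'a measure" where
  "gen_sigma M W N I = sigma (space M) (\<Union>i\<in>I. {W i -` A \<inter> space M | A. A \<in> sets N})"

definition conv_in_prob :: "'a measure \<Rightarrow> (nat \<Rightarrow> 'a \<Rightarrow> real) \<Rightarrow> real \<Rightarrow> bool" where
  "conv_in_prob M Xn c \<longleftrightarrow>
     (\<forall>\<delta>>0. (\<lambda>n. measure M {\<omega>\<in>space M. \<delta> < \<bar>Xn n \<omega> - c\<bar>}) \<longlonglongrightarrow> 0)"

text \<open>e is (a version of) the propensity score x \<mapsto> P(Z = 1 | X = x).\<close>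
definition is_propensity :: "'a measure \<Rightarrow> 'x measure \<Rightarrow> ('a \<Rightarrow> 'x) \<Rightarrow> ('a \<Rightarrow> real) \<Rightarrow> ('x \<Rightarrow> real) \<Rightarrow> bool" where
  "is_propensity M MX X Z e \<longleftrightarrow> e \<in> borel_measurable MX \<and>
     (\<forall>A\<in>sets MX. measure M {\<omega>\<in>space M. X \<omega> \<in> A \<and> Z \<omega> = 1}
        = (\<integral>\<omega>. indicator (X -` A \<inter> space M) \<omega> * e (X \<omega>) \<partial>M))"

text \<open>kappa is a regular conditional distribution of Y given X = x, Z = 1.\<close>
definition is_cond_dist_kernel :: "'a measure \<Rightarrow> 'x measure \<Rightarrow> ('a \<Rightarrow> 'x) \<Rightarrow> ('a \<Rightarrow> real) \<Rightarrow> ('a \<Rightarrow> real)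
     \<Rightarrow> ('x \<Rightarrow> real measure) \<Rightarrow> bool" where
  "is_cond_dist_kernel M MX X Y Z \<kappa> \<longleftrightarrow> \<kappa> \<in> MX \<rightarrow>\<^sub>M prob_algebra borel \<and>
     (\<forall>A\<in>sets MX. \<forall>B\<in>sets borel.
        measure M {\<omega>\<in>space M. X \<omega> \<in> A \<and> Z \<omega> = 1 \<and> Y \<omega> \<in> B}
        = (\<integral>\<omega>. indicator (X -` A \<inter> space M) \<omega> * indicator {1} (Z \<omega>) * measure (\<kappa> (X \<omega>)) B \<partial>M))"

definition quantile :: "real measure \<Rightarrow> real \<Rightarrow> real" where
  "quantile \<mu> \<tau> = Inf {y. \<tau> \<le> measure \<mu> {..y}}"

definition cond_quantile :: "('x \<Rightarrow> real measure) \<Rightarrow> real \<Rightarrow> 'x \<Rightarrow> real" where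
  "cond_quantile \<kappa> \<tau> x = quantile (\<kappa> x) \<tau>"

end

theory Submission
  imports Defs
begin

text \<open>
  The empirical squared error splits over the \<open>K\<close> folds. On fold \<open>k\<close> the estimate
  \<open>Qhat_{-k}\<close> is measurable with respect to the other observations, so by independence the fold
  average of \<open>(Qhat_{-k}(X_i) - Q(X_i))\<^sup>2\<close> has conditional mean at most \<open>\<parallel>Qhat_{-k} - Q\<parallel>\<^sup>2\<close>;
  truncating where this risk is small and applying Markov's inequality gives \<open>o_P(1)\<close>. Each fold
  average is normalised by \<open>n\<close> rather than by the fold size.

  For the weighted mean write
  \<open>Qhat Z / ehat = Q Z / e + (Qhat - Q) Z / ehat + Q Z (1 / ehat - 1 / e)\<close>.
  The first term obeys the weak law of large numbers: its mean is \<open>E Q(X)\<close> because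
  \<open>E[Z | X] = e(X)\<close>, and it is square integrable because
  \<open>min \<tau> (1 - \<tau>) Q(x)\<^sup>2 \<le> E[Y\<^sup>2 | X = x, Z = 1]\<close> and overlap bounds the latter by \<open>E Y\<^sup>2 / \<epsilon>\<close>.
  Once \<open>ehat \<ge> \<epsilon> / 2\<close>, Cauchy-Schwarz bounds the second term by \<open>2 / \<epsilon>\<close> times the root mean
  squared error, and the third by a multiple of \<open>sup |ehat - e|\<close> times the mean of \<open>|Q(X_i)|\<close>.
\<close>

section \<open>Convergence in probability\<close>

lemma conv_in_probI:
  assumes "\<And>\<delta> \<eta>. \<delta> > 0 \<Longrightarrow> \<eta> > 0 \<Longrightarrow>
     eventually (\<lambda>n. measure M {\<omega>\<in>space M. \<delta> < \<bar>U n \<omega> - c\<bar>} \<le> \<eta>) sequentially"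
  shows "conv_in_prob M U c"
  unfolding conv_in_prob_def
proof (intro allI impI order_tendstoI)
  fix \<delta> a :: real assume "\<delta> > 0" "0 < a"
  then have "eventually (\<lambda>n. measure M {\<omega>\<in>space M. \<delta> < \<bar>U n \<omega> - c\<bar>} \<le> a / 2) sequentially"
    by (intro assms) auto
  then show "eventually (\<lambda>n. measure M {\<omega>\<in>space M. \<delta> < \<bar>U n \<omega> - c\<bar>} < a) sequentially"
    by eventually_elim (use \<open>0 < a\<close> in auto)
qed (auto intro: always_eventually less_le_trans[OF _ measure_nonneg])

lemma conv_in_probD:
  assumes "conv_in_prob M U c" "\<delta> > 0" "\<eta> > 0"
  shows "eventually (\<lambda>n. measure M {\<omega>\<in>space M. \<delta> < \<bar>U n \<omega> - c\<bar>} < \<eta>) sequentially"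
  using assms unfolding conv_in_prob_def by (auto dest!: order_tendstoD(2))

lemma conv_in_prob_const: "conv_in_prob M (\<lambda>n \<omega>. c) c"
  by (rule conv_in_probI) simp

lemma (in prob_space) conv_in_prob_add:
  assumes U: "conv_in_prob M U a" and V: "conv_in_prob M V b"
    and [measurable]: "\<And>n. U n \<in> borel_measurable M" "\<And>n. V n \<in> borel_measurable M"
  shows "conv_in_prob M (\<lambda>n \<omega>. U n \<omega> + V n \<omega>) (a + b)"
proof (rule conv_in_probI)
  fix \<delta> \<eta> :: real assume "\<delta> > 0" "\<eta> > 0"
  then have "eventually (\<lambda>n. prob {\<omega>\<in>space M. \<delta> / 2 < \<bar>U n \<omega> - a\<bar>} < \<eta> / 2 \<and>
      prob {\<omega>\<in>space M. \<delta> / 2 < \<bar>V n \<omega> - b\<bar>} < \<eta> / 2) sequentially"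
    by (intro eventually_conj conv_in_probD[OF U] conv_in_probD[OF V]) auto
  then show "eventually (\<lambda>n. prob {\<omega>\<in>space M. \<delta> < \<bar>U n \<omega> + V n \<omega> - (a + b)\<bar>} \<le> \<eta>) sequentially"
  proof eventually_elim
    case (elim n)
    have "\<delta> / 2 < \<bar>U n \<omega> - a\<bar> \<or> \<delta> / 2 < \<bar>V n \<omega> - b\<bar>"
      if "\<delta> < \<bar>U n \<omega> + V n \<omega> - (a + b)\<bar>" for \<omega>
      using that by linarith
    then have "prob {\<omega>\<in>space M. \<delta> < \<bar>U n \<omega> + V n \<omega> - (a + b)\<bar>}
        \<le> prob ({\<omega>\<in>space M. \<delta> / 2 < \<bar>U n \<omega> - a\<bar>} \<union> {\<omega>\<in>space M. \<delta> / 2 < \<bar>V n \<omega> - b\<bar>})"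
      by (intro finite_measure_mono) auto
    also have "\<dots> \<le> prob {\<omega>\<in>space M. \<delta> / 2 < \<bar>U n \<omega> - a\<bar>} + prob {\<omega>\<in>space M. \<delta> / 2 < \<bar>V n \<omega> - b\<bar>}"
      by (intro measure_Un_le) auto
    finally show ?case using elim by linarith
  qed
qed

lemma (in prob_space) conv_in_prob_sum:
  assumes "finite I" "\<And>k. k \<in> I \<Longrightarrow> conv_in_prob M (U k) (c k)"
    and "\<And>k n. k \<in> I \<Longrightarrow> U k n \<in> borel_measurable M"
  shows "conv_in_prob M (\<lambda>n \<omega>. \<Sum>k\<in>I. U k n \<omega>) (\<Sum>k\<in>I. c k)"
  using assms
proof (induction I rule: finite_induct)
  case empty
  show ?case using conv_in_prob_const[of M 0] by simp
next
  case (insert k I)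
  then show ?case by (simp add: conv_in_prob_add)
qed

lemma conv_in_prob_cmult:
  assumes "conv_in_prob M U 0"
  shows "conv_in_prob M (\<lambda>n \<omega>. a * U n \<omega>) 0"
proof (cases "a = 0")
  case True
  then show ?thesis using conv_in_prob_const[of M 0] by simp
next
  case False
  show ?thesis unfolding conv_in_prob_def
  proof (intro allI impI)
    fix \<delta> :: real assume "\<delta> > 0"
    then have "(\<lambda>n. measure M {\<omega>\<in>space M. \<delta> / \<bar>a\<bar> < \<bar>U n \<omega> - 0\<bar>}) \<longlonglongrightarrow> 0"
      using assms False unfolding conv_in_prob_def by simp
    moreover have "\<delta> / \<bar>a\<bar> < \<bar>x\<bar> \<longleftrightarrow> \<delta> < \<bar>a * x - 0\<bar>" for x
      using False by (simp add: abs_mult divide_less_eq mult.commute)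
    ultimately show "(\<lambda>n. measure M {\<omega>\<in>space M. \<delta> < \<bar>a * U n \<omega> - 0\<bar>}) \<longlonglongrightarrow> 0"
      by simp
  qed
qed

lemma conv_in_prob_sqrt:
  assumes "conv_in_prob M U 0" and "\<And>n \<omega>. 0 \<le> U n \<omega>"
  shows "conv_in_prob M (\<lambda>n \<omega>. sqrt (U n \<omega>)) 0"
  unfolding conv_in_prob_def
proof (intro allI impI)
  fix \<delta> :: real assume "\<delta> > 0"
  then have "(\<lambda>n. measure M {\<omega>\<in>space M. \<delta>\<^sup>2 < \<bar>U n \<omega> - 0\<bar>}) \<longlonglongrightarrow> 0"
    using assms(1) unfolding conv_in_prob_def by simp
  moreover have "\<delta>\<^sup>2 < \<bar>U n \<omega> - 0\<bar> \<longleftrightarrow> \<delta> < \<bar>sqrt (U n \<omega>) - 0\<bar>" for n \<omega>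
  proof -
    have "\<delta>\<^sup>2 < U n \<omega> \<longleftrightarrow> sqrt (\<delta>\<^sup>2) < sqrt (U n \<omega>)" by (rule real_sqrt_less_iff[symmetric])
    then show ?thesis using \<open>\<delta> > 0\<close> assms(2)[of n \<omega>] by simp
  qed
  ultimately show "(\<lambda>n. measure M {\<omega>\<in>space M. \<delta> < \<bar>sqrt (U n \<omega>) - 0\<bar>}) \<longlonglongrightarrow> 0"
    by simp
qed

lemma (in prob_space) conv_in_prob_dominated:
  assumes B: "conv_in_prob M B 0"
    and [measurable]: "\<And>n. U n \<in> borel_measurable M" "\<And>n. B n \<in> borel_measurable M"
    and E: "\<And>n. E n \<in> events" "(\<lambda>n. prob (E n)) \<longlonglongrightarrow> 1"
    and dom: "\<And>n \<omega>. \<omega> \<in> E n \<Longrightarrow> \<bar>U n \<omega> - c\<bar> \<le> B n \<omega>"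
  shows "conv_in_prob M U c"
proof (rule conv_in_probI)
  fix \<delta> \<eta> :: real assume "\<delta> > 0" "\<eta> > 0"
  have "eventually (\<lambda>n. 1 - \<eta> / 2 < prob (E n)) sequentially"
    using \<open>\<eta> > 0\<close> by (intro order_tendstoD(1)[OF E(2)]) simp
  moreover have "eventually (\<lambda>n. prob {\<omega>\<in>space M. \<delta> < \<bar>B n \<omega> - 0\<bar>} < \<eta> / 2) sequentially"
    using \<open>\<delta> > 0\<close> \<open>\<eta> > 0\<close> by (intro conv_in_probD[OF B]) auto
  ultimately show "eventually (\<lambda>n. prob {\<omega>\<in>space M. \<delta> < \<bar>U n \<omega> - c\<bar>} \<le> \<eta>) sequentially"
  proof eventually_elim
    case (elim n)
    have "{\<omega>\<in>space M. \<delta> < \<bar>U n \<omega> - c\<bar>} \<subseteq> {\<omega>\<in>space M. \<delta> < \<bar>B n \<omega> - 0\<bar>} \<union> (space M - E n)"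
      using dom[of _ n] by force
    then have "prob {\<omega>\<in>space M. \<delta> < \<bar>U n \<omega> - c\<bar>}
        \<le> prob {\<omega>\<in>space M. \<delta> < \<bar>B n \<omega> - 0\<bar>} + prob (space M - E n)"
      using E(1)[of n] by (intro order_trans[OF finite_measure_mono measure_Un_le]) auto
    then show ?case using elim prob_compl[OF E(1)[of n]] by linarith
  qed
qed

lemma measure_ge_le_nn_integral_divide:
  assumes [measurable]: "u \<in> borel_measurable M"
    and int: "(\<integral>\<^sup>+x. ennreal (u x) \<partial>M) \<le> ennreal r" and "0 \<le> r" "0 < c"
  shows "measure M {x\<in>space M. c \<le> u x} \<le> r / c"
proof -
  have "ennreal c * emeasure M {x\<in>space M. c \<le> u x} = (\<integral>\<^sup>+x. ennreal c * indicator {x\<in>space M. c \<le> u x} x \<partial>M)"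
    by (simp add: nn_integral_cmult_indicator)
  also have "\<dots> \<le> (\<integral>\<^sup>+x. ennreal (u x) \<partial>M)"
    by (intro nn_integral_mono) (auto split: split_indicator intro: ennreal_leI)
  finally have bound: "ennreal c * emeasure M {x\<in>space M. c \<le> u x} \<le> ennreal r"
    using int by (rule order_trans)
  moreover have "emeasure M {x\<in>space M. c \<le> u x} \<noteq> \<infinity>"
    using bound \<open>0 < c\<close> by (auto simp: ennreal_mult_eq_top_iff top_unique)
  ultimately have "c * measure M {x\<in>space M. c \<le> u x} \<le> r"
    using \<open>0 < c\<close> \<open>0 \<le> r\<close> by (simp add: emeasure_eq_ennreal_measure ennreal_mult[symmetric])
  then show ?thesis
    using \<open>0 < c\<close> by (simp add: field_simps)
qed

lemma (in prob_space) conv_in_prob_zero_if_bounded_by_small_multiple: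
  assumes [measurable]: "\<And>n. U n \<in> borel_measurable M"
    and L: "\<And>n. integrable M (L n)" "\<And>n \<omega>. 0 \<le> L n \<omega>" "\<And>n. expectation (L n) \<le> C"
    and small: "\<And>h. h > 0 \<Longrightarrow> \<exists>E. (\<forall>n. E n \<in> events \<and> (\<forall>\<omega>\<in>E n. \<bar>U n \<omega>\<bar> \<le> h * L n \<omega>))
                  \<and> (\<lambda>n. prob (E n)) \<longlonglongrightarrow> 1"
  shows "conv_in_prob M U 0"
proof (rule conv_in_probI)
  fix \<delta> \<eta> :: real assume "\<delta> > 0" "\<eta> > 0"
  define R where "R = 2 * \<bar>C\<bar> / \<eta> + 1"
  have "R > 0" using \<open>\<eta> > 0\<close> by (simp add: R_def add_nonneg_pos)
  have Markov: "prob {\<omega>\<in>space M. R \<le> L n \<omega>} \<le> \<eta> / 2" for n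
  proof -
    have "prob {\<omega>\<in>space M. R \<le> L n \<omega>} \<le> expectation (L n) / R"
      using L(1,2) \<open>R > 0\<close> by (intro integral_Markov_inequality_measure[where A="space M"]) auto
    also have "\<dots> \<le> \<bar>C\<bar> / R"
      using L(3)[of n] \<open>R > 0\<close> by (simp add: divide_right_mono)
    also have "\<dots> \<le> \<eta> / 2"
      using \<open>\<eta> > 0\<close> \<open>R > 0\<close> by (simp add: R_def field_simps)
    finally show ?thesis .
  qed
  obtain E where E: "\<And>n. E n \<in> events" "\<And>n \<omega>. \<omega> \<in> E n \<Longrightarrow> \<bar>U n \<omega>\<bar> \<le> \<delta> / R * L n \<omega>"
    and E_lim: "(\<lambda>n. prob (E n)) \<longlonglongrightarrow> 1"
    using small[of "\<delta> / R"] \<open>\<delta> > 0\<close> \<open>R > 0\<close> by auto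
  have "eventually (\<lambda>n. 1 - \<eta> / 2 < prob (E n)) sequentially"
    using \<open>\<eta> > 0\<close> by (intro order_tendstoD(1)[OF E_lim]) simp
  then show "eventually (\<lambda>n. prob {\<omega>\<in>space M. \<delta> < \<bar>U n \<omega> - 0\<bar>} \<le> \<eta>) sequentially"
  proof eventually_elim
    case (elim n)
    have "\<bar>U n \<omega>\<bar> < \<delta>" if "\<omega> \<in> E n" "L n \<omega> < R" for \<omega>
    proof -
      have "\<delta> / R * L n \<omega> < \<delta> / R * R"
        using that(2) \<open>\<delta> > 0\<close> \<open>R > 0\<close> by (intro mult_strict_left_mono) auto
      then show ?thesis using E(2)[OF that(1)] \<open>R > 0\<close> by simp
    qed
    then have "{\<omega>\<in>space M. \<delta> < \<bar>U n \<omega> - 0\<bar>} \<subseteq> {\<omega>\<in>space M. R \<le> L n \<omega>} \<union> (space M - E n)"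
      by fastforce
    then have "prob {\<omega>\<in>space M. \<delta> < \<bar>U n \<omega> - 0\<bar>} \<le> prob {\<omega>\<in>space M. R \<le> L n \<omega>} + prob (space M - E n)"
      using E(1)[of n] L(1)[of n] by (intro order_trans[OF finite_measure_mono measure_Un_le]) auto
    then show ?case using elim Markov[of n] prob_compl[OF E(1)[of n]] by linarith
  qed
qed

lemma (in prob_space) conv_in_prob_zero_if_truncated_mean_small:
  fixes D :: "nat \<Rightarrow> 'a \<Rightarrow> ennreal"
  assumes [measurable]: "\<And>n. U n \<in> borel_measurable M" "\<And>n. D n \<in> borel_measurable M"
    and U_nonneg: "\<And>n \<omega>. 0 \<le> U n \<omega>"
    and D: "\<And>\<delta>. \<delta> > 0 \<Longrightarrow> (\<lambda>n. prob {\<omega>\<in>space M. ennreal \<delta> < D n \<omega>}) \<longlonglongrightarrow> 0"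
    and truncated: "\<And>n \<theta>. \<theta> > 0 \<Longrightarrow>
      (\<integral>\<^sup>+\<omega>. ennreal (U n \<omega>) * indicator {\<omega>\<in>space M. D n \<omega> \<le> ennreal \<theta>} \<omega> \<partial>M) \<le> ennreal \<theta>"
  shows "conv_in_prob M U 0"
proof (rule conv_in_probI)
  fix \<delta> \<eta> :: real assume "\<delta> > 0" "\<eta> > 0"
  define \<theta> where "\<theta> = \<eta> * \<delta> / 2"
  have "\<theta> > 0" using \<open>\<delta> > 0\<close> \<open>\<eta> > 0\<close> by (simp add: \<theta>_def)
  have "eventually (\<lambda>n. prob {\<omega>\<in>space M. ennreal \<theta> < D n \<omega>} < \<eta> / 2) sequentially"
    using \<open>\<eta> > 0\<close> by (intro order_tendstoD(2)[OF D[OF \<open>\<theta> > 0\<close>]]) simp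
  then show "eventually (\<lambda>n. prob {\<omega>\<in>space M. \<delta> < \<bar>U n \<omega> - 0\<bar>} \<le> \<eta>) sequentially"
  proof eventually_elim
    case (elim n)
    define G where "G = {\<omega>\<in>space M. D n \<omega> \<le> ennreal \<theta>}"
    have [measurable]: "G \<in> events" unfolding G_def by measurable
    have "(\<integral>\<^sup>+\<omega>. ennreal (U n \<omega> * indicator G \<omega>) \<partial>M) = (\<integral>\<^sup>+\<omega>. ennreal (U n \<omega>) * indicator G \<omega> \<partial>M)"
      by (intro nn_integral_cong) (simp split: split_indicator)
    then have truncated_G: "(\<integral>\<^sup>+\<omega>. ennreal (U n \<omega> * indicator G \<omega>) \<partial>M) \<le> ennreal \<theta>"
      using truncated[OF \<open>\<theta> > 0\<close>, of n] by (simp add: G_def)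
    have "prob {\<omega>\<in>space M. \<delta> \<le> U n \<omega> * indicator G \<omega>} \<le> \<theta> / \<delta>"
      by (rule measure_ge_le_nn_integral_divide[OF _ truncated_G]) (use \<open>\<theta> > 0\<close> \<open>\<delta> > 0\<close> in auto)
    moreover have "{\<omega>\<in>space M. \<delta> < \<bar>U n \<omega> - 0\<bar>}
        \<subseteq> {\<omega>\<in>space M. ennreal \<theta> < D n \<omega>} \<union> {\<omega>\<in>space M. \<delta> \<le> U n \<omega> * indicator G \<omega>}"
      using U_nonneg[of n] by (auto simp: G_def not_le split: split_indicator)
    then have "prob {\<omega>\<in>space M. \<delta> < \<bar>U n \<omega> - 0\<bar>}
        \<le> prob {\<omega>\<in>space M. ennreal \<theta> < D n \<omega>} + prob {\<omega>\<in>space M. \<delta> \<le> U n \<omega> * indicator G \<omega>}"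
      by (intro order_trans[OF finite_measure_mono measure_Un_le]) auto
    ultimately show ?case
      using elim \<open>\<delta> > 0\<close> by (simp add: \<theta>_def)
  qed
qed

section \<open>Cross-fitted empirical risk\<close>

lemma
  assumes "\<And>i. W i \<in> M \<rightarrow>\<^sub>M N"
  shows space_gen_sigma: "space (gen_sigma M W N I) = space M"
    and sets_gen_sigma: "sets (gen_sigma M W N I) = sigma_sets (space M) (\<Union>i\<in>I. {W i -` A \<inter> space M | A. A \<in> sets N})"
    and subalgebra_gen_sigma: "subalgebra M (gen_sigma M W N I)"
proof -
  have gen: "(\<Union>i\<in>I. {W i -` A \<inter> space M | A. A \<in> sets N}) \<subseteq> Pow (space M)" by auto
  show space: "space (gen_sigma M W N I) = space M"
    unfolding gen_sigma_def using gen by (simp add: space_measure_of_conv)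
  show sets: "sets (gen_sigma M W N I) = sigma_sets (space M) (\<Union>i\<in>I. {W i -` A \<inter> space M | A. A \<in> sets N})"
    unfolding gen_sigma_def using gen by (simp add: sets_measure_of_conv)
  have "(\<Union>i\<in>I. {W i -` A \<inter> space M | A. A \<in> sets N}) \<subseteq> sets M"
    using assms by (auto intro: measurable_sets)
  then have "sets (gen_sigma M W N I) \<subseteq> sets M"
    unfolding sets by (rule sets.sigma_sets_subset)
  then show "subalgebra M (gen_sigma M W N I)" using space by (simp add: subalgebra_def)
qed

lemma measurable_gen_sigma_comp:
  assumes "\<And>i. W i \<in> M \<rightarrow>\<^sub>M N"
    and h: "(\<lambda>(\<omega>, x). h \<omega> x) \<in> gen_sigma M W N I \<Otimes>\<^sub>M MX \<rightarrow>\<^sub>M L"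
    and V: "V \<in> M \<rightarrow>\<^sub>M MX"
  shows "(\<lambda>\<omega>. h \<omega> (V \<omega>)) \<in> M \<rightarrow>\<^sub>M L"
proof -
  have "(\<lambda>\<omega>. \<omega>) \<in> M \<rightarrow>\<^sub>M gen_sigma M W N I"
    using subalgebra_gen_sigma[of W M N, OF assms(1)] by (auto simp: measurable_def subalgebra_def)
  then have "(\<lambda>\<omega>. (\<omega>, V \<omega>)) \<in> M \<rightarrow>\<^sub>M gen_sigma M W N I \<Otimes>\<^sub>M MX"
    using V by (rule measurable_Pair)
  from measurable_compose[OF this h] show ?thesis by simp
qed

lemma (in prob_space) prob_Int_gen_sigma_indep:
  assumes W: "\<And>i. W i \<in> M \<rightarrow>\<^sub>M N" and ind: "indep_vars (\<lambda>_. N) W UNIV"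
    and "i \<notin> I" and A: "A \<in> sets (gen_sigma M W N I)" and B: "B \<in> sets N"
  shows "prob (A \<inter> (W i -` B \<inter> space M)) = prob A * prob (W i -` B \<inter> space M)"
proof -
  let ?E = "\<lambda>j. {W j -` A \<inter> space M | A. A \<in> sets N}"
  let ?I = "case_bool I {i}"
  have "indep_sets ?E UNIV" using ind unfolding indep_vars_def2 by auto
  have "indep_sets (\<lambda>b. sigma_sets (space M) (\<Union>j\<in>?I b. ?E j)) UNIV"
  proof (rule indep_sets_collect_sigma)
    show "indep_sets ?E (\<Union>j\<in>UNIV. ?I j)"
      using \<open>indep_sets ?E UNIV\<close> by (rule indep_sets_mono_index[rotated]) auto
    show "Int_stable (?E j)" for j
    proof (rule Int_stableI)
      fix a b assume "a \<in> ?E j" "b \<in> ?E j"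
      then obtain A1 B1 where "a = W j -` A1 \<inter> space M" "A1 \<in> sets N" "b = W j -` B1 \<inter> space M" "B1 \<in> sets N"
        by auto
      then show "a \<inter> b \<in> ?E j" by (intro CollectI exI[of _ "A1 \<inter> B1"]) auto
    qed
    show "disjoint_family_on ?I UNIV"
      using \<open>i \<notin> I\<close> by (auto simp: disjoint_family_on_def split: bool.splits)
  qed
  then have "prob (\<Inter>b\<in>UNIV. case_bool A (W i -` B \<inter> space M) b) =
      (\<Prod>b\<in>UNIV. prob (case_bool A (W i -` B \<inter> space M) b))"
  proof (rule indep_setsD)
    show "\<forall>b\<in>UNIV. case_bool A (W i -` B \<inter> space M) b \<in> sigma_sets (space M) (\<Union>j\<in>?I b. ?E j)"
      using A B sets_gen_sigma[of W M N, OF W] by (auto intro!: sigma_sets.Basic split: bool.split)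
  qed auto
  then show ?thesis by (simp add: UNIV_bool Int_commute)
qed

lemma (in prob_space) pair_measure_gen_sigma_indep:
  assumes W: "\<And>i. W i \<in> M \<rightarrow>\<^sub>M N" and ind: "indep_vars (\<lambda>_. N) W UNIV"
    and "i \<notin> I" and f: "f \<in> N \<rightarrow>\<^sub>M MX"
  defines "R \<equiv> restr_to_subalg M (gen_sigma M W N I)" and "D \<equiv> distr M MX (\<lambda>\<omega>. f (W i \<omega>))"
  shows "R \<Otimes>\<^sub>M D = distr M (R \<Otimes>\<^sub>M D) (\<lambda>\<omega>. (\<omega>, f (W i \<omega>)))"
proof -
  have sub: "subalgebra M (gen_sigma M W N I)" by (rule subalgebra_gen_sigma[of W M N, OF W])
  have sets_R: "sets R = sets (gen_sigma M W N I)" unfolding R_def by (rule sets_restr_to_subalg[OF sub])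
  have fW: "(\<lambda>\<omega>. f (W i \<omega>)) \<in> M \<rightarrow>\<^sub>M MX" using W f by measurable
  interpret R: prob_space R unfolding R_def by (rule prob_space_restr_to_subalg[OF sub prob_space_axioms])
  interpret D: prob_space D unfolding D_def by (rule prob_space_distr[OF fW])
  have "(\<lambda>\<omega>. \<omega>) \<in> M \<rightarrow>\<^sub>M R"
    using sub sets_R by (auto simp: measurable_def subalgebra_def R_def space_restr_to_subalg)
  then have pair: "(\<lambda>\<omega>. (\<omega>, f (W i \<omega>))) \<in> M \<rightarrow>\<^sub>M R \<Otimes>\<^sub>M D"
    using fW by (auto intro!: measurable_Pair simp: D_def)
  show ?thesis
  proof (rule pair_measure_eqI)
    fix A B assume A: "A \<in> sets R" and B: "B \<in> sets D"
    have A_gen: "A \<in> sets (gen_sigma M W N I)" using A sets_R by simp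
    have "A \<in> sets M" using A_gen sub by (auto simp: subalgebra_def)
    have B': "f -` B \<inter> space N \<in> sets N" using f B by (simp add: D_def measurable_sets)
    have preimage: "(\<lambda>\<omega>. f (W i \<omega>)) -` B \<inter> space M = W i -` (f -` B \<inter> space N) \<inter> space M"
      using W[of i] by (auto simp: measurable_def)
    have "(\<lambda>\<omega>. (\<omega>, f (W i \<omega>))) -` (A \<times> B) \<inter> space M = A \<inter> (W i -` (f -` B \<inter> space N) \<inter> space M)"
      using sets.sets_into_space[OF \<open>A \<in> sets M\<close>] preimage by auto
    then have "emeasure (distr M (R \<Otimes>\<^sub>M D) (\<lambda>\<omega>. (\<omega>, f (W i \<omega>)))) (A \<times> B)
        = emeasure M (A \<inter> (W i -` (f -` B \<inter> space N) \<inter> space M))"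
      using A B pair by (subst emeasure_distr) auto
    also have "\<dots> = ennreal (prob A * prob (W i -` (f -` B \<inter> space N) \<inter> space M))"
      using prob_Int_gen_sigma_indep[OF W ind \<open>i \<notin> I\<close> A_gen B'] by (simp add: emeasure_eq_measure)
    also have "\<dots> = emeasure R A * emeasure D B"
      using A B A_gen sub fW
      by (simp add: R_def D_def emeasure_restr_to_subalg emeasure_distr preimage
          emeasure_eq_measure ennreal_mult)
    finally show "emeasure R A * emeasure D B = emeasure (distr M (R \<Otimes>\<^sub>M D) (\<lambda>\<omega>. (\<omega>, f (W i \<omega>)))) (A \<times> B)"
      by simp
  qed (simp_all add: R.sigma_finite_measure_axioms D.sigma_finite_measure_axioms)
qed

lemma (in prob_space) nn_integral_indep_gen_sigma:
  fixes g :: "'a \<Rightarrow> 'x \<Rightarrow> ennreal"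
  assumes W: "\<And>i. W i \<in> M \<rightarrow>\<^sub>M N" and ind: "indep_vars (\<lambda>_. N) W UNIV"
    and "i \<notin> I" and f: "f \<in> N \<rightarrow>\<^sub>M MX"
    and g: "(\<lambda>(\<omega>, x). g \<omega> x) \<in> borel_measurable (gen_sigma M W N I \<Otimes>\<^sub>M MX)"
  shows "(\<integral>\<^sup>+\<omega>. g \<omega> (f (W i \<omega>)) \<partial>M) = (\<integral>\<^sup>+\<omega>. (\<integral>\<^sup>+x. g \<omega> x \<partial>distr M MX (\<lambda>\<omega>. f (W i \<omega>))) \<partial>M)"
proof -
  define R where "R = restr_to_subalg M (gen_sigma M W N I)"
  define D where "D = distr M MX (\<lambda>\<omega>. f (W i \<omega>))"
  have sub: "subalgebra M (gen_sigma M W N I)" by (rule subalgebra_gen_sigma[of W M N, OF W])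
  have sets_R: "sets R = sets (gen_sigma M W N I)" unfolding R_def by (rule sets_restr_to_subalg[OF sub])
  have fW: "(\<lambda>\<omega>. f (W i \<omega>)) \<in> M \<rightarrow>\<^sub>M MX" using W f by measurable
  interpret D: prob_space D unfolding D_def by (rule prob_space_distr[OF fW])
  have "(\<lambda>\<omega>. \<omega>) \<in> M \<rightarrow>\<^sub>M R"
    using sub sets_R by (auto simp: measurable_def subalgebra_def R_def space_restr_to_subalg)
  then have pair: "(\<lambda>\<omega>. (\<omega>, f (W i \<omega>))) \<in> M \<rightarrow>\<^sub>M R \<Otimes>\<^sub>M D"
    using fW by (auto intro!: measurable_Pair simp: D_def)
  have product: "R \<Otimes>\<^sub>M D = distr M (R \<Otimes>\<^sub>M D) (\<lambda>\<omega>. (\<omega>, f (W i \<omega>)))"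
    unfolding R_def D_def by (rule pair_measure_gen_sigma_indep[OF W ind \<open>i \<notin> I\<close> f])
  have g_RD: "(\<lambda>(\<omega>, x). g \<omega> x) \<in> borel_measurable (R \<Otimes>\<^sub>M D)"
    using g by (simp add: measurable_cong_sets[OF sets_pair_measure_cong[OF sets_R] refl] D_def)
  have "(\<integral>\<^sup>+\<omega>. g \<omega> (f (W i \<omega>)) \<partial>M) = integral\<^sup>N (distr M (R \<Otimes>\<^sub>M D) (\<lambda>\<omega>. (\<omega>, f (W i \<omega>)))) (\<lambda>(\<omega>, x). g \<omega> x)"
    using pair g_RD by (subst nn_integral_distr) auto
  also have "\<dots> = (\<integral>\<^sup>+\<omega>. (\<integral>\<^sup>+x. g \<omega> x \<partial>D) \<partial>R)"
    using D.nn_integral_fst[OF g_RD] by (simp flip: product)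
  also have "\<dots> = (\<integral>\<^sup>+\<omega>. (\<integral>\<^sup>+x. g \<omega> x \<partial>D) \<partial>M)"
  proof (rule nn_integral_subalgebra)
    show "(\<lambda>\<omega>. \<integral>\<^sup>+x. g \<omega> x \<partial>D) \<in> borel_measurable R" using g_RD by measurable
    show "sets R \<subseteq> sets M" using sets_R sub by (simp add: subalgebra_def)
    show "\<And>A. A \<in> sets R \<Longrightarrow> emeasure R A = emeasure M A"
      using sets_R sub by (simp add: R_def emeasure_restr_to_subalg)
  qed (simp add: R_def space_restr_to_subalg)
  finally show ?thesis by (simp add: D_def)
qed

lemma nn_integral_average_le:
  assumes S: "S \<subseteq> {..<n}" and [measurable]: "\<And>i. i \<in> S \<Longrightarrow> g i \<in> borel_measurable M"
    and g_nonneg: "\<And>i \<omega>. 0 \<le> g i \<omega>"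
    and bound: "\<And>i. i \<in> S \<Longrightarrow> (\<integral>\<^sup>+\<omega>. ennreal (g i \<omega>) \<partial>M) \<le> ennreal \<theta>" and "0 \<le> \<theta>"
  shows "(\<integral>\<^sup>+\<omega>. ennreal (1 / real n * (\<Sum>i\<in>S. g i \<omega>)) \<partial>M) \<le> ennreal \<theta>"
proof -
  have "finite S" using S finite_subset by blast
  have "ennreal (1 / real n * (\<Sum>i\<in>S. g i \<omega>)) = (\<Sum>i\<in>S. ennreal (1 / real n) * ennreal (g i \<omega>))" for \<omega>
  proof -
    have "ennreal (1 / real n * (\<Sum>i\<in>S. g i \<omega>)) = ennreal (\<Sum>i\<in>S. 1 / real n * g i \<omega>)"
      by (simp only: sum_distrib_left)
    also have "\<dots> = (\<Sum>i\<in>S. ennreal (1 / real n * g i \<omega>))"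
      by (rule sum_ennreal[symmetric]) (simp add: g_nonneg)
    also have "\<dots> = (\<Sum>i\<in>S. ennreal (1 / real n) * ennreal (g i \<omega>))"
      using g_nonneg by (intro sum.cong refl ennreal_mult) auto
    finally show ?thesis .
  qed
  then have "(\<integral>\<^sup>+\<omega>. ennreal (1 / real n * (\<Sum>i\<in>S. g i \<omega>)) \<partial>M)
      = (\<Sum>i\<in>S. ennreal (1 / real n) * (\<integral>\<^sup>+\<omega>. ennreal (g i \<omega>) \<partial>M))"
    by (simp add: nn_integral_sum nn_integral_cmult)
  also have "\<dots> \<le> (\<Sum>i\<in>S. ennreal (1 / real n) * ennreal \<theta>)"
    by (intro sum_mono mult_left_mono bound) auto
  also have "\<dots> = ennreal (real (card S) / real n * \<theta>)"
    using \<open>0 \<le> \<theta>\<close> by (simp add: ennreal_mult[symmetric] ennreal_of_nat_eq_real_of_nat)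
  also have "\<dots> \<le> ennreal \<theta>"
  proof (intro ennreal_leI mult_left_le_one_le)
    show "real (card S) / real n \<le> 1"
      using card_mono[OF _ S] by (cases "n = 0") auto
  qed (use \<open>0 \<le> \<theta>\<close> in auto)
  finally show ?thesis .
qed

lemma (in prob_space) nn_integral_held_out_indicator_le:
  fixes H :: "'a \<Rightarrow> 'x \<Rightarrow> real"
  assumes W: "\<And>i. W i \<in> M \<rightarrow>\<^sub>M N" and ind: "indep_vars (\<lambda>_. N) W UNIV"
    and "i \<notin> J" and f: "f \<in> N \<rightarrow>\<^sub>M MX" and ident: "distr M MX (\<lambda>\<omega>. f (W i \<omega>)) = PX"
    and H: "(\<lambda>(\<omega>, x). H \<omega> x) \<in> borel_measurable (gen_sigma M W N J \<Otimes>\<^sub>M MX)"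
    and G: "G \<in> sets (gen_sigma M W N J)"
    and risk: "\<And>\<omega>. \<omega> \<in> G \<Longrightarrow> (\<integral>\<^sup>+x. ennreal (H \<omega> x) \<partial>PX) \<le> ennreal \<theta>"
  shows "(\<integral>\<^sup>+\<omega>. ennreal (H \<omega> (f (W i \<omega>)) * indicator G \<omega>) \<partial>M) \<le> ennreal \<theta>"
proof -
  have "(\<integral>\<^sup>+\<omega>. ennreal (H \<omega> (f (W i \<omega>)) * indicator G \<omega>) \<partial>M)
      = (\<integral>\<^sup>+\<omega>. (\<integral>\<^sup>+x. ennreal (H \<omega> x * indicator G \<omega>) \<partial>PX) \<partial>M)"
    using nn_integral_indep_gen_sigma[OF W ind \<open>i \<notin> J\<close> f, of "\<lambda>\<omega> x. ennreal (H \<omega> x * indicator G \<omega>)"]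
      H G by (simp add: ident)
  also have "\<dots> = (\<integral>\<^sup>+\<omega>. (\<integral>\<^sup>+x. ennreal (H \<omega> x) \<partial>PX) * indicator G \<omega> \<partial>M)"
    by (intro nn_integral_cong) (simp split: split_indicator)
  also have "\<dots> \<le> (\<integral>\<^sup>+\<omega>. ennreal \<theta> \<partial>M)"
    using risk by (intro nn_integral_mono) (simp split: split_indicator)
  finally show ?thesis by (simp add: emeasure_space_1)
qed

text \<open>Conditionally on the observations outside \<open>S n\<close>, the held-out average has mean at most
  the risk \<open>D n\<close>; truncating at \<open>D n \<le> \<theta>\<close> turns this into a Markov bound.\<close>

lemma (in prob_space) conv_in_prob_held_out_mean:
  fixes H :: "nat \<Rightarrow> 'a \<Rightarrow> 'x \<Rightarrow> real"
  assumes W: "\<And>i. W i \<in> M \<rightarrow>\<^sub>M N" and ind: "indep_vars (\<lambda>_. N) W UNIV"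
    and f: "f \<in> N \<rightarrow>\<^sub>M MX" and ident: "\<And>i. distr M MX (\<lambda>\<omega>. f (W i \<omega>)) = PX"
    and H: "\<And>n. (\<lambda>(\<omega>, x). H n \<omega> x) \<in> borel_measurable (gen_sigma M W N (J n) \<Otimes>\<^sub>M MX)"
    and H_nonneg: "\<And>n \<omega> x. 0 \<le> H n \<omega> x"
    and S: "\<And>n. S n \<subseteq> {..<n}" "\<And>n. S n \<inter> J n = {}"
    and risk: "\<And>\<delta>. \<delta> > 0 \<Longrightarrow>
      (\<lambda>n. prob {\<omega>\<in>space M. ennreal \<delta> < (\<integral>\<^sup>+x. ennreal (H n \<omega> x) \<partial>PX)}) \<longlonglongrightarrow> 0"
  shows "conv_in_prob M (\<lambda>n \<omega>. 1 / real n * (\<Sum>i\<in>S n. H n \<omega> (f (W i \<omega>)))) 0"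
proof (rule conv_in_prob_zero_if_truncated_mean_small)
  define D where "D n \<omega> = (\<integral>\<^sup>+x. ennreal (H n \<omega> x) \<partial>PX)" for n \<omega>
  have fW[measurable]: "(\<lambda>\<omega>. f (W i \<omega>)) \<in> M \<rightarrow>\<^sub>M MX" for i using W f by measurable
  interpret PX: prob_space PX unfolding ident[symmetric, of 0] by (rule prob_space_distr[OF fW])
  have sets_PX: "sets PX = sets MX" unfolding ident[symmetric, of 0] by simp
  have H_PX: "(\<lambda>(\<omega>, x). ennreal (H n \<omega> x)) \<in> borel_measurable (gen_sigma M W N (J n) \<Otimes>\<^sub>M PX)" for n
    using H[of n] by (simp add: measurable_cong_sets[OF sets_pair_measure_cong[OF refl sets_PX] refl])
  have D_gen[measurable]: "D n \<in> borel_measurable (gen_sigma M W N (J n))" for n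
    unfolding D_def using H_PX by (rule PX.borel_measurable_nn_integral)
  show "D n \<in> borel_measurable M" for n
    using measurable_from_subalg[OF subalgebra_gen_sigma[of W M N, OF W] D_gen] .
  have H_i[measurable]: "(\<lambda>\<omega>. H n \<omega> (f (W i \<omega>))) \<in> borel_measurable M" for n i
    using measurable_gen_sigma_comp[OF W H fW] .
  show "(\<lambda>\<omega>. 1 / real n * (\<Sum>i\<in>S n. H n \<omega> (f (W i \<omega>)))) \<in> borel_measurable M" for n
    by measurable
  show "0 \<le> 1 / real n * (\<Sum>i\<in>S n. H n \<omega> (f (W i \<omega>)))" for n \<omega>
    using H_nonneg by (simp add: sum_nonneg)
  show "(\<lambda>n. prob {\<omega>\<in>space M. ennreal \<delta> < D n \<omega>}) \<longlonglongrightarrow> 0" if "\<delta> > 0" for \<delta>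
    using risk[OF that] by (simp add: D_def)
  fix n and \<theta> :: real assume "\<theta> > 0"
  define G where "G = {\<omega>\<in>space M. D n \<omega> \<le> ennreal \<theta>}"
  have "G = D n -` {..ennreal \<theta>} \<inter> space (gen_sigma M W N (J n))"
    using space_gen_sigma[of W M N, OF W] by (auto simp: G_def)
  then have G_gen: "G \<in> sets (gen_sigma M W N (J n))"
    by (simp add: measurable_sets[OF D_gen])
  then have [measurable]: "G \<in> sets M"
    using subalgebra_gen_sigma[of W M N, OF W] by (auto simp: subalgebra_def)
  have "(\<integral>\<^sup>+\<omega>. ennreal (H n \<omega> (f (W i \<omega>)) * indicator G \<omega>) \<partial>M) \<le> ennreal \<theta>" if "i \<in> S n" for i
    using S(2) that by (intro nn_integral_held_out_indicator_le[OF W ind _ f ident H G_gen])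
      (auto simp: G_def D_def)
  then have "(\<integral>\<^sup>+\<omega>. ennreal (1 / real n * (\<Sum>i\<in>S n. H n \<omega> (f (W i \<omega>)) * indicator G \<omega>)) \<partial>M) \<le> ennreal \<theta>"
    using S(1) H_nonneg \<open>\<theta> > 0\<close> by (intro nn_integral_average_le) auto
  moreover have "ennreal (1 / real n * (\<Sum>i\<in>S n. H n \<omega> (f (W i \<omega>)))) * indicator G \<omega>
      = ennreal (1 / real n * (\<Sum>i\<in>S n. H n \<omega> (f (W i \<omega>)) * indicator G \<omega>))" for \<omega>
    by (simp split: split_indicator)
  ultimately show "(\<integral>\<^sup>+\<omega>. ennreal (1 / real n * (\<Sum>i\<in>S n. H n \<omega> (f (W i \<omega>))))
      * indicator {\<omega>\<in>space M. D n \<omega> \<le> ennreal \<theta>} \<omega> \<partial>M) \<le> ennreal \<theta>"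
    by (simp add: G_def)
qed

lemma (in prob_space) conv_in_prob_cross_fit_risk:
  fixes H :: "nat \<Rightarrow> nat \<Rightarrow> 'a \<Rightarrow> 'x \<Rightarrow> real" and fold :: "nat \<Rightarrow> nat \<Rightarrow> nat"
  assumes W: "\<And>i. W i \<in> M \<rightarrow>\<^sub>M N" and ind: "indep_vars (\<lambda>_. N) W UNIV"
    and f: "f \<in> N \<rightarrow>\<^sub>M MX" and ident: "\<And>i. distr M MX (\<lambda>\<omega>. f (W i \<omega>)) = PX"
    and fold_range: "\<And>n i. i < n \<Longrightarrow> fold n i < K"
    and H: "\<And>n k. k < K \<Longrightarrow>
      (\<lambda>(\<omega>, x). H n k \<omega> x) \<in> borel_measurable (gen_sigma M W N {i. i < n \<and> fold n i \<noteq> k} \<Otimes>\<^sub>M MX)"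
    and H_nonneg: "\<And>n k \<omega> x. 0 \<le> H n k \<omega> x"
    and risk: "\<And>k \<delta>. k < K \<Longrightarrow> \<delta> > 0 \<Longrightarrow>
      (\<lambda>n. prob {\<omega>\<in>space M. ennreal \<delta> < (\<integral>\<^sup>+x. ennreal (H n k \<omega> x) \<partial>PX)}) \<longlonglongrightarrow> 0"
  shows "conv_in_prob M (\<lambda>n \<omega>. 1 / real n * (\<Sum>i<n. H n (fold n i) \<omega> (f (W i \<omega>)))) 0"
proof -
  define R where "R k n \<omega> = 1 / real n * (\<Sum>i\<in>{i. i < n \<and> fold n i = k}. H n k \<omega> (f (W i \<omega>)))" for k n \<omega>
  have "conv_in_prob M (R k) 0" if "k < K" for k
    unfolding R_def using W ind f ident H[OF that] H_nonneg risk[OF that]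
    by (intro conv_in_prob_held_out_mean[where J="\<lambda>n. {i. i < n \<and> fold n i \<noteq> k}"]) auto
  moreover have "R k n \<in> borel_measurable M" if "k < K" for k n
  proof -
    have "(\<lambda>\<omega>. H n k \<omega> (f (W i \<omega>))) \<in> borel_measurable M" for i
      by (rule measurable_gen_sigma_comp[OF W H[OF that] measurable_compose[OF W f]])
    then show ?thesis unfolding R_def by measurable
  qed
  ultimately have "conv_in_prob M (\<lambda>n \<omega>. \<Sum>k<K. R k n \<omega>) (\<Sum>k<K. 0)"
    by (intro conv_in_prob_sum) auto
  moreover have "1 / real n * (\<Sum>i<n. H n (fold n i) \<omega> (f (W i \<omega>))) = (\<Sum>k<K. R k n \<omega>)" for n \<omega>
  proof -
    have "(\<Sum>i<n. H n (fold n i) \<omega> (f (W i \<omega>)))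
        = (\<Sum>k<K. \<Sum>i\<in>{i\<in>{..<n}. fold n i = k}. H n (fold n i) \<omega> (f (W i \<omega>)))"
      by (rule sum.group[symmetric]) (auto intro: fold_range)
    then show ?thesis by (simp add: R_def sum_distrib_left)
  qed
  ultimately show ?thesis by simp
qed

section \<open>Independent identically distributed sequences\<close>

lemma
  fixes g :: "'b \<Rightarrow> real"
  assumes distr: "distr M N X = distr M N Y"
    and [measurable]: "X \<in> M \<rightarrow>\<^sub>M N" "Y \<in> M \<rightarrow>\<^sub>M N" "g \<in> borel_measurable N"
  shows integrable_eq_if_distr_eq: "integrable M (\<lambda>\<omega>. g (X \<omega>)) \<longleftrightarrow> integrable M (\<lambda>\<omega>. g (Y \<omega>))"
    and integral_eq_if_distr_eq: "(\<integral>\<omega>. g (X \<omega>) \<partial>M) = (\<integral>\<omega>. g (Y \<omega>) \<partial>M)"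
proof -
  show "integrable M (\<lambda>\<omega>. g (X \<omega>)) \<longleftrightarrow> integrable M (\<lambda>\<omega>. g (Y \<omega>))"
    using integrable_distr_eq[of X M N g] integrable_distr_eq[of Y M N g] by (simp add: distr)
  show "(\<integral>\<omega>. g (X \<omega>) \<partial>M) = (\<integral>\<omega>. g (Y \<omega>) \<partial>M)"
    using integral_distr[of X M N g] integral_distr[of Y M N g] by (simp add: distr)
qed

lemma distr_comp_eq_if_distr_eq:
  assumes "distr M N X = distr M N Y" "X \<in> M \<rightarrow>\<^sub>M N" "Y \<in> M \<rightarrow>\<^sub>M N" "h \<in> N \<rightarrow>\<^sub>M L"
  shows "distr M L (\<lambda>\<omega>. h (X \<omega>)) = distr M L (\<lambda>\<omega>. h (Y \<omega>))"
  using distr_distr[OF assms(4,2)] distr_distr[OF assms(4,3)] assms(1) by (simp add: comp_def)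

lemma AE_eq_if_distr_eq:
  assumes "distr M N X = distr M N Y" "X \<in> M \<rightarrow>\<^sub>M N" "Y \<in> M \<rightarrow>\<^sub>M N" "{x\<in>space N. P x} \<in> sets N"
  shows "(AE \<omega> in M. P (X \<omega>)) \<longleftrightarrow> (AE \<omega> in M. P (Y \<omega>))"
  by (metis assms(1) AE_distr_iff[OF assms(2,4)] AE_distr_iff[OF assms(3,4)])

lemma (in prob_space)
  assumes W: "\<And>i. W i \<in> M \<rightarrow>\<^sub>M N" and ind: "indep_vars (\<lambda>_. N) W UNIV"
    and ident: "\<And>i. distr M N (W i) = distr M N (W 0)" and h: "h \<in> N \<rightarrow>\<^sub>M L"
  shows indep_vars_iid_comp: "indep_vars (\<lambda>_. L) (\<lambda>i \<omega>. h (W i \<omega>)) UNIV"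
    and distr_iid_comp: "distr M L (\<lambda>\<omega>. h (W i \<omega>)) = distr M L (\<lambda>\<omega>. h (W 0 \<omega>))"
  using indep_vars_compose2[OF ind, of "\<lambda>_. h"] h distr_comp_eq_if_distr_eq[OF ident W W h] by auto

lemma (in prob_space)
  fixes U :: "'i \<Rightarrow> 'a \<Rightarrow> real"
  assumes ind: "indep_vars (\<lambda>_. borel) U UNIV"
    and L2: "\<And>i. integrable M (\<lambda>\<omega>. (U i \<omega>)\<^sup>2)" and centered: "\<And>i. expectation (U i) = 0"
    and "finite I"
  shows integrable_square_sum_indep: "integrable M (\<lambda>\<omega>. (\<Sum>i\<in>I. U i \<omega>)\<^sup>2)"
    and expectation_square_sum_indep:
      "expectation (\<lambda>\<omega>. (\<Sum>i\<in>I. U i \<omega>)\<^sup>2) = (\<Sum>i\<in>I. expectation (\<lambda>\<omega>. (U i \<omega>)\<^sup>2))"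
proof -
  have [measurable]: "U i \<in> borel_measurable M" for i
    using ind by (auto simp: indep_vars_def)
  have L1: "integrable M (U i)" for i
    using square_integrable_imp_integrable[of "U i"] L2[of i] by simp
  have cross: "integrable M (\<lambda>\<omega>. U i \<omega> * U j \<omega>) \<and>
      expectation (\<lambda>\<omega>. U i \<omega> * U j \<omega>) = (if i = j then expectation (\<lambda>\<omega>. (U i \<omega>)\<^sup>2) else 0)" for i j
  proof (cases "i = j")
    case True
    then show ?thesis using L2[of i] by (simp add: power2_eq_square)
  next
    case False
    have ij: "indep_vars (\<lambda>_. borel) U {i, j}" by (rule indep_vars_subset[OF ind]) auto
    have "integrable M (\<lambda>\<omega>. \<Prod>l\<in>{i, j}. U l \<omega>)"
      by (rule indep_vars_integrable) (use ij L1 in auto)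
    moreover have "expectation (\<lambda>\<omega>. \<Prod>l\<in>{i, j}. U l \<omega>) = (\<Prod>l\<in>{i, j}. expectation (U l))"
      by (rule indep_vars_lebesgue_integral) (use ij L1 in auto)
    ultimately show ?thesis using False centered by simp
  qed
  have square: "(\<Sum>i\<in>I. U i \<omega>)\<^sup>2 = (\<Sum>i\<in>I. \<Sum>j\<in>I. U i \<omega> * U j \<omega>)" for \<omega>
    by (simp add: power2_eq_square sum_product)
  show "integrable M (\<lambda>\<omega>. (\<Sum>i\<in>I. U i \<omega>)\<^sup>2)"
    unfolding square using cross by auto
  have "expectation (\<lambda>\<omega>. (\<Sum>i\<in>I. U i \<omega>)\<^sup>2) = (\<Sum>i\<in>I. \<Sum>j\<in>I. expectation (\<lambda>\<omega>. U i \<omega> * U j \<omega>))"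
    unfolding square using cross by (simp add: Bochner_Integration.integral_sum)
  also have "\<dots> = (\<Sum>i\<in>I. expectation (\<lambda>\<omega>. (U i \<omega>)\<^sup>2))"
    using cross \<open>finite I\<close> by (simp add: sum.delta)
  finally show "expectation (\<lambda>\<omega>. (\<Sum>i\<in>I. U i \<omega>)\<^sup>2) = (\<Sum>i\<in>I. expectation (\<lambda>\<omega>. (U i \<omega>)\<^sup>2))" .
qed

lemma (in prob_space)
  fixes V :: "nat \<Rightarrow> 'a \<Rightarrow> real"
  assumes ind: "indep_vars (\<lambda>_. borel) V UNIV"
    and ident: "\<And>i. distr M borel (V i) = distr M borel (V 0)"
    and L2: "integrable M (\<lambda>\<omega>. (V 0 \<omega>)\<^sup>2)"
  defines "m \<equiv> expectation (V 0)"
  shows integrable_square_centered_sum_iid: "integrable M (\<lambda>\<omega>. (\<Sum>i<n. V i \<omega> - m)\<^sup>2)"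
    and expectation_square_centered_sum_iid:
      "expectation (\<lambda>\<omega>. (\<Sum>i<n. V i \<omega> - m)\<^sup>2) = real n * expectation (\<lambda>\<omega>. (V 0 \<omega> - m)\<^sup>2)"
proof -
  have V[measurable]: "V i \<in> borel_measurable M" for i
    using ind by (auto simp: indep_vars_def)
  define U where "U i \<omega> = V i \<omega> - m" for i \<omega>
  have V_L2: "integrable M (\<lambda>\<omega>. (V i \<omega>)\<^sup>2)" for i
    using L2 integrable_eq_if_distr_eq[OF ident[of i] V V borel_measurable_power[OF measurable_ident]] by simp
  have V_L1: "integrable M (V i)" for i
    using square_integrable_imp_integrable[OF V V_L2] .
  have U_L2: "integrable M (\<lambda>\<omega>. (U i \<omega>)\<^sup>2)" for i
    using V_L2[of i] V_L1[of i] unfolding U_def power2_eq_square ring_distribs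
    by (intro Bochner_Integration.integrable_diff) auto
  have U_mean: "expectation (U i) = 0" for i
    using V_L1[of i] integral_eq_if_distr_eq[OF ident[of i] V V measurable_ident_sets[OF refl]]
    by (simp add: U_def[abs_def] prob_space m_def)
  have U_var: "expectation (\<lambda>\<omega>. (U i \<omega>)\<^sup>2) = expectation (\<lambda>\<omega>. (V 0 \<omega> - m)\<^sup>2)" for i
  proof -
    have "(\<lambda>x. (x - m)\<^sup>2) \<in> borel_measurable borel" by measurable
    from integral_eq_if_distr_eq[OF ident[of i] V V this] show ?thesis by (simp add: U_def)
  qed
  have U_ind: "indep_vars (\<lambda>_. borel) U UNIV"
    using indep_vars_compose2[OF ind, of "\<lambda>_ x. x - m" "\<lambda>_. borel"] by (simp add: U_def[abs_def])
  show "integrable M (\<lambda>\<omega>. (\<Sum>i<n. V i \<omega> - m)\<^sup>2)"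
    using integrable_square_sum_indep[OF U_ind U_L2 U_mean] by (simp add: U_def)
  have "expectation (\<lambda>\<omega>. (\<Sum>i<n. U i \<omega>)\<^sup>2) = real n * expectation (\<lambda>\<omega>. (V 0 \<omega> - m)\<^sup>2)"
    using expectation_square_sum_indep[OF U_ind U_L2 U_mean, of "{..<n}"] by (simp add: U_var)
  then show "expectation (\<lambda>\<omega>. (\<Sum>i<n. V i \<omega> - m)\<^sup>2) = real n * expectation (\<lambda>\<omega>. (V 0 \<omega> - m)\<^sup>2)"
    by (simp add: U_def)
qed

lemma (in prob_space) conv_in_prob_sample_mean:
  fixes V :: "nat \<Rightarrow> 'a \<Rightarrow> real"
  assumes ind: "indep_vars (\<lambda>_. borel) V UNIV"
    and ident: "\<And>i. distr M borel (V i) = distr M borel (V 0)"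
    and L2: "integrable M (\<lambda>\<omega>. (V 0 \<omega>)\<^sup>2)"
  shows "conv_in_prob M (\<lambda>n \<omega>. 1 / real n * (\<Sum>i<n. V i \<omega>)) (expectation (V 0))"
  unfolding conv_in_prob_def
proof (intro allI impI)
  fix \<delta> :: real assume "\<delta> > 0"
  have [measurable]: "V i \<in> borel_measurable M" for i
    using ind by (auto simp: indep_vars_def)
  define m where "m = expectation (V 0)"
  define \<sigma>2 where "\<sigma>2 = expectation (\<lambda>\<omega>. (V 0 \<omega> - m)\<^sup>2)"
  have "prob {\<omega>\<in>space M. \<delta> < \<bar>1 / real n * (\<Sum>i<n. V i \<omega>) - m\<bar>} \<le> \<sigma>2 / \<delta>\<^sup>2 / real n"
    if "n > 0" for n
  proof -
    have "(real n * \<delta>)\<^sup>2 \<le> (\<Sum>i<n. V i \<omega> - m)\<^sup>2"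
      if "\<delta> < \<bar>1 / real n * (\<Sum>i<n. V i \<omega>) - m\<bar>" for \<omega>
    proof -
      have "(\<Sum>i<n. V i \<omega> - m) = real n * (1 / real n * (\<Sum>i<n. V i \<omega>) - m)"
        using \<open>n > 0\<close> by (simp add: sum_subtractf field_simps)
      then have "real n * \<delta> \<le> \<bar>\<Sum>i<n. V i \<omega> - m\<bar>"
        using that \<open>n > 0\<close> by (simp add: abs_mult)
      then have "(real n * \<delta>)\<^sup>2 \<le> \<bar>\<Sum>i<n. V i \<omega> - m\<bar>\<^sup>2"
        using \<open>\<delta> > 0\<close> by (intro power_mono) auto
      then show ?thesis by simp
    qed
    then have "prob {\<omega>\<in>space M. \<delta> < \<bar>1 / real n * (\<Sum>i<n. V i \<omega>) - m\<bar>}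
        \<le> prob {\<omega>\<in>space M. (real n * \<delta>)\<^sup>2 \<le> (\<Sum>i<n. V i \<omega> - m)\<^sup>2}"
      by (intro finite_measure_mono) auto
    also have "\<dots> \<le> expectation (\<lambda>\<omega>. (\<Sum>i<n. V i \<omega> - m)\<^sup>2) / (real n * \<delta>)\<^sup>2"
      using \<open>n > 0\<close> \<open>\<delta> > 0\<close> unfolding m_def
      by (intro integral_Markov_inequality_measure[where A="space M"]
          integrable_square_centered_sum_iid[OF ind ident L2]) auto
    also have "\<dots> = real n * \<sigma>2 / (real n * \<delta>)\<^sup>2"
      unfolding m_def \<sigma>2_def by (simp only: expectation_square_centered_sum_iid[OF ind ident L2])
    also have "\<dots> = \<sigma>2 / \<delta>\<^sup>2 / real n"
      using \<open>n > 0\<close> by (simp add: power2_eq_square)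
    finally show ?thesis .
  qed
  then have bound: "eventually (\<lambda>n. prob {\<omega>\<in>space M. \<delta> < \<bar>1 / real n * (\<Sum>i<n. V i \<omega>) - m\<bar>}
      \<le> \<sigma>2 / \<delta>\<^sup>2 / real n) sequentially"
    by (intro eventually_sequentiallyI[of 1]) auto
  show "(\<lambda>n. prob {\<omega>\<in>space M. \<delta> < \<bar>1 / real n * (\<Sum>i<n. V i \<omega>) - expectation (V 0)\<bar>}) \<longlonglongrightarrow> 0"
    unfolding m_def[symmetric] by (rule tendsto_sandwich[OF _ bound tendsto_const lim_const_over_n]) simp
qed

section \<open>Plug-in inverse propensity weighting\<close>

lemma mean_abs_le_sqrt_mean_square:
  fixes d :: "nat \<Rightarrow> real"
  shows "1 / real n * (\<Sum>i<n. \<bar>d i\<bar>) \<le> sqrt (1 / real n * (\<Sum>i<n. (d i)\<^sup>2))"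
proof (cases "n = 0")
  case False
  have "(1 / real n * (\<Sum>i<n. \<bar>d i\<bar>))\<^sup>2 = (\<Sum>i<n. \<bar>d i\<bar>)\<^sup>2 / real n / real n"
    by (simp add: power2_eq_square)
  also have "\<dots> \<le> (\<Sum>i<n. (d i)\<^sup>2) * real n / real n / real n"
    using sum_squared_le_sum_of_squares[of "\<lambda>i. \<bar>d i\<bar>" "{..<n}"] by (intro divide_right_mono) auto
  also have "\<dots> = 1 / real n * (\<Sum>i<n. (d i)\<^sup>2)"
    using False by simp
  finally show ?thesis by (intro real_le_rsqrt) (simp add: sum_nonneg)
qed simp

lemma abs_inverse_diff_le:
  fixes a b \<epsilon> :: real
  assumes "0 < \<epsilon>" "\<epsilon> \<le> b" "\<bar>a - b\<bar> \<le> \<epsilon> / 2"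
  shows "\<bar>1 / a - 1 / b\<bar> \<le> 2 * \<bar>a - b\<bar> / \<epsilon>\<^sup>2"
proof -
  have "\<epsilon> / 2 \<le> a" using assms by linarith
  then have "0 < a" "0 < b" using assms by auto
  have "\<bar>1 / a - 1 / b\<bar> = \<bar>a - b\<bar> / (a * b)"
    using \<open>0 < a\<close> \<open>0 < b\<close> by (simp add: diff_frac_eq abs_minus_commute)
  also have "\<dots> \<le> \<bar>a - b\<bar> / (\<epsilon> / 2 * \<epsilon>)"
    using assms \<open>\<epsilon> / 2 \<le> a\<close> by (intro divide_left_mono mult_mono) auto
  also have "\<dots> = 2 * \<bar>a - b\<bar> / \<epsilon>\<^sup>2"
    by (simp add: power2_eq_square)
  finally show ?thesis .
qed

lemma abs_weighted_inverse_diff_le: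
  fixes q z a b \<epsilon> h :: real
  assumes "0 < \<epsilon>" "\<epsilon> \<le> b" "\<bar>a - b\<bar> \<le> min (\<epsilon> / 2) (h * \<epsilon>\<^sup>2 / 2)" "\<bar>z\<bar> \<le> 1"
  shows "\<bar>q * z * (1 / a - 1 / b)\<bar> \<le> h * \<bar>q\<bar>"
proof -
  have "\<bar>1 / a - 1 / b\<bar> \<le> 2 * \<bar>a - b\<bar> / \<epsilon>\<^sup>2"
    using assms by (intro abs_inverse_diff_le) auto
  also have "\<dots> \<le> 2 * (h * \<epsilon>\<^sup>2 / 2) / \<epsilon>\<^sup>2"
    using assms(3) by (intro divide_right_mono mult_left_mono) auto
  also have "\<dots> = h" using \<open>0 < \<epsilon>\<close> by simp
  finally have "\<bar>z\<bar> * \<bar>1 / a - 1 / b\<bar> \<le> 1 * h"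
    using assms(4) by (intro mult_mono) auto
  then have "\<bar>q\<bar> * (\<bar>z\<bar> * \<bar>1 / a - 1 / b\<bar>) \<le> \<bar>q\<bar> * h"
    by (intro mult_left_mono) auto
  then show ?thesis by (simp only: abs_mult mult.assoc mult.commute[of h])
qed

lemma abs_mean_le_mean_bound:
  fixes c b :: "nat \<Rightarrow> real"
  assumes "\<And>i. i < n \<Longrightarrow> \<bar>c i\<bar> \<le> b i"
  shows "\<bar>1 / real n * (\<Sum>i<n. c i)\<bar> \<le> 1 / real n * (\<Sum>i<n. b i)"
proof -
  have "0 \<le> 1 / real n" by simp
  then have "\<bar>1 / real n * (\<Sum>i<n. c i)\<bar> = 1 / real n * \<bar>\<Sum>i<n. c i\<bar>"
    by (simp only: abs_mult abs_of_nonneg)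
  also have "\<dots> \<le> 1 / real n * (\<Sum>i<n. \<bar>c i\<bar>)"
    by (intro mult_left_mono sum_abs) simp
  also have "\<dots> \<le> 1 / real n * (\<Sum>i<n. b i)"
    using assms by (intro mult_left_mono sum_mono) auto
  finally show ?thesis .
qed

lemma (in prob_space) conv_in_prob_numerator_error:
  fixes qh eh :: "nat \<Rightarrow> nat \<Rightarrow> 'a \<Rightarrow> real" and q z :: "nat \<Rightarrow> 'a \<Rightarrow> real"
  assumes [measurable]: "\<And>n i. qh n i \<in> borel_measurable M" "\<And>n i. eh n i \<in> borel_measurable M"
      "\<And>i. q i \<in> borel_measurable M" "\<And>i. z i \<in> borel_measurable M"
    and z: "\<And>i \<omega>. \<omega> \<in> space M \<Longrightarrow> \<bar>z i \<omega>\<bar> \<le> 1"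
    and risk: "conv_in_prob M (\<lambda>n \<omega>. 1 / real n * (\<Sum>i<n. (qh n i \<omega> - q i \<omega>)\<^sup>2)) 0"
    and "c > 0"
    and A: "\<And>n. A n \<in> events" "(\<lambda>n. prob (A n)) \<longlonglongrightarrow> 1"
      "\<And>n \<omega> i. \<omega> \<in> A n \<Longrightarrow> i < n \<Longrightarrow> c \<le> eh n i \<omega>"
  shows "conv_in_prob M (\<lambda>n \<omega>. 1 / real n * (\<Sum>i<n. (qh n i \<omega> - q i \<omega>) * z i \<omega> / eh n i \<omega>)) 0"
proof (rule conv_in_prob_dominated)
  show "conv_in_prob M (\<lambda>n \<omega>. 1 / c * sqrt (1 / real n * (\<Sum>i<n. (qh n i \<omega> - q i \<omega>)\<^sup>2))) 0"
    by (intro conv_in_prob_cmult conv_in_prob_sqrt[OF risk]) (simp add: sum_nonneg)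
  fix n \<omega> assume "\<omega> \<in> A n"
  then have "\<omega> \<in> space M" using A(1) sets.sets_into_space by blast
  have bound: "\<bar>(qh n i \<omega> - q i \<omega>) * z i \<omega> / eh n i \<omega>\<bar> \<le> 1 / c * \<bar>qh n i \<omega> - q i \<omega>\<bar>" if "i < n" for i
  proof -
    have "c \<le> eh n i \<omega>" using A(3)[OF \<open>\<omega> \<in> A n\<close> that] .
    then have "\<bar>(qh n i \<omega> - q i \<omega>) * z i \<omega>\<bar> / eh n i \<omega> \<le> \<bar>qh n i \<omega> - q i \<omega>\<bar> / c"
      using z[OF \<open>\<omega> \<in> space M\<close>, of i] \<open>c > 0\<close>
      by (intro frac_le) (auto simp: abs_mult intro: mult_right_le_one_le)
    then show ?thesis using \<open>c > 0\<close> \<open>c \<le> eh n i \<omega>\<close> by simp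
  qed
  have "\<bar>1 / real n * (\<Sum>i<n. (qh n i \<omega> - q i \<omega>) * z i \<omega> / eh n i \<omega>)\<bar>
      \<le> 1 / real n * (\<Sum>i<n. 1 / c * \<bar>qh n i \<omega> - q i \<omega>\<bar>)"
    using bound by (rule abs_mean_le_mean_bound)
  also have "\<dots> = 1 / c * (1 / real n * (\<Sum>i<n. \<bar>qh n i \<omega> - q i \<omega>\<bar>))"
    by (simp add: sum_distrib_left ac_simps)
  also have "\<dots> \<le> 1 / c * sqrt (1 / real n * (\<Sum>i<n. (qh n i \<omega> - q i \<omega>)\<^sup>2))"
    using \<open>c > 0\<close> by (intro mult_left_mono mean_abs_le_sqrt_mean_square) auto
  finally show "\<bar>1 / real n * (\<Sum>i<n. (qh n i \<omega> - q i \<omega>) * z i \<omega> / eh n i \<omega>) - 0\<bar>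
      \<le> 1 / c * sqrt (1 / real n * (\<Sum>i<n. (qh n i \<omega> - q i \<omega>)\<^sup>2))"
    by simp
qed (use A in auto)

lemma (in prob_space) conv_in_prob_denominator_error:
  fixes eh :: "nat \<Rightarrow> nat \<Rightarrow> 'a \<Rightarrow> real" and q z ee :: "nat \<Rightarrow> 'a \<Rightarrow> real"
  assumes [measurable]: "\<And>n i. eh n i \<in> borel_measurable M"
      "\<And>i. q i \<in> borel_measurable M" "\<And>i. z i \<in> borel_measurable M" "\<And>i. ee i \<in> borel_measurable M"
    and z: "\<And>i \<omega>. \<omega> \<in> space M \<Longrightarrow> \<bar>z i \<omega>\<bar> \<le> 1"
    and q: "\<And>i. integrable M (q i)" "\<And>i. expectation (\<lambda>\<omega>. \<bar>q i \<omega>\<bar>) \<le> C"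
    and "\<epsilon> > 0"
    and close: "\<And>h. h > 0 \<Longrightarrow> \<exists>A. (\<forall>n. A n \<in> events \<and>
        (\<forall>\<omega>\<in>A n. \<forall>i<n. \<epsilon> \<le> ee i \<omega> \<and> \<bar>eh n i \<omega> - ee i \<omega>\<bar> \<le> h)) \<and> (\<lambda>n. prob (A n)) \<longlonglongrightarrow> 1"
  shows "conv_in_prob M (\<lambda>n \<omega>. 1 / real n * (\<Sum>i<n. q i \<omega> * z i \<omega> * (1 / eh n i \<omega> - 1 / ee i \<omega>))) 0"
proof (rule conv_in_prob_zero_if_bounded_by_small_multiple)
  define L where "L n \<omega> = 1 / real n * (\<Sum>i<n. \<bar>q i \<omega>\<bar>)" for n \<omega>
  show "integrable M (L n)" for n
    unfolding L_def using q(1) by auto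
  show "0 \<le> L n \<omega>" for n \<omega>
    by (simp add: L_def sum_nonneg)
  have "0 \<le> expectation (\<lambda>\<omega>. \<bar>q 0 \<omega>\<bar>)" by (rule Bochner_Integration.integral_nonneg) simp
  then have "0 \<le> C" using q(2)[of 0] by linarith
  show "expectation (L n) \<le> C" for n
  proof -
    have "expectation (L n) = 1 / real n * (\<Sum>i<n. expectation (\<lambda>\<omega>. \<bar>q i \<omega>\<bar>))"
      unfolding L_def using q(1) by (simp add: Bochner_Integration.integral_sum)
    also have "\<dots> \<le> 1 / real n * (\<Sum>i<n. C)"
      using q(2) by (intro mult_left_mono sum_mono) auto
    also have "\<dots> \<le> C" using \<open>0 \<le> C\<close> by (cases "n = 0") auto
    finally show ?thesis .
  qed
  fix h :: real assume "h > 0"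
  define h' where "h' = min (\<epsilon> / 2) (h * \<epsilon>\<^sup>2 / 2)"
  have "h' > 0" using \<open>h > 0\<close> \<open>\<epsilon> > 0\<close> by (simp add: h'_def)
  obtain A where A: "\<And>n. A n \<in> events" "(\<lambda>n. prob (A n)) \<longlonglongrightarrow> 1"
    and A_close: "\<And>n \<omega> i. \<omega> \<in> A n \<Longrightarrow> i < n \<Longrightarrow> \<epsilon> \<le> ee i \<omega> \<and> \<bar>eh n i \<omega> - ee i \<omega>\<bar> \<le> h'"
    using close[OF \<open>h' > 0\<close>] by blast
  have "\<bar>1 / real n * (\<Sum>i<n. q i \<omega> * z i \<omega> * (1 / eh n i \<omega> - 1 / ee i \<omega>))\<bar> \<le> h * L n \<omega>"
    if "\<omega> \<in> A n" for n \<omega>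
  proof -
    have "\<omega> \<in> space M" using A(1) sets.sets_into_space that by blast
    have "\<bar>q i \<omega> * z i \<omega> * (1 / eh n i \<omega> - 1 / ee i \<omega>)\<bar> \<le> h * \<bar>q i \<omega>\<bar>" if "i < n" for i
      using A_close[OF \<open>\<omega> \<in> A n\<close> that] z[OF \<open>\<omega> \<in> space M\<close>, of i] \<open>\<epsilon> > 0\<close>
      by (intro abs_weighted_inverse_diff_le) (auto simp: h'_def)
    then have "\<bar>1 / real n * (\<Sum>i<n. q i \<omega> * z i \<omega> * (1 / eh n i \<omega> - 1 / ee i \<omega>))\<bar>
        \<le> 1 / real n * (\<Sum>i<n. h * \<bar>q i \<omega>\<bar>)"
      by (rule abs_mean_le_mean_bound)
    then show ?thesis by (simp add: L_def sum_distrib_left ac_simps)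
  qed
  then show "\<exists>E. (\<forall>n. E n \<in> events \<and> (\<forall>\<omega>\<in>E n.
      \<bar>1 / real n * (\<Sum>i<n. q i \<omega> * z i \<omega> * (1 / eh n i \<omega> - 1 / ee i \<omega>))\<bar> \<le> h * L n \<omega>))
      \<and> (\<lambda>n. prob (E n)) \<longlonglongrightarrow> 1"
    using A by blast
qed measurable

lemma (in prob_space) close_events_under_overlap:
  fixes eh :: "nat \<Rightarrow> nat \<Rightarrow> 'a \<Rightarrow> real" and ee :: "nat \<Rightarrow> 'a \<Rightarrow> real"
  assumes [measurable]: "\<And>i. ee i \<in> borel_measurable M"
    and overlap: "AE \<omega> in M. \<forall>i. \<epsilon> \<le> ee i \<omega>"
    and close: "\<And>h. h > 0 \<Longrightarrow> \<exists>A. (\<forall>n. A n \<in> events \<and>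
        (\<forall>\<omega>\<in>A n. \<forall>i<n. \<bar>eh n i \<omega> - ee i \<omega>\<bar> \<le> h)) \<and> (\<lambda>n. prob (A n)) \<longlonglongrightarrow> 1"
    and "h > 0"
  shows "\<exists>A. (\<forall>n. A n \<in> events \<and> (\<forall>\<omega>\<in>A n. \<forall>i<n. \<epsilon> \<le> ee i \<omega> \<and> \<bar>eh n i \<omega> - ee i \<omega>\<bar> \<le> h))
    \<and> (\<lambda>n. prob (A n)) \<longlonglongrightarrow> 1"
proof -
  obtain A where A: "\<And>n. A n \<in> events" "\<And>n \<omega> i. \<omega> \<in> A n \<Longrightarrow> i < n \<Longrightarrow> \<bar>eh n i \<omega> - ee i \<omega>\<bar> \<le> h"
    and A_lim: "(\<lambda>n. prob (A n)) \<longlonglongrightarrow> 1"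
    using close[OF \<open>h > 0\<close>] by blast
  define G where "G = {\<omega>\<in>space M. \<forall>i. \<epsilon> \<le> ee i \<omega>}"
  have [measurable]: "G \<in> events" unfolding G_def by measurable
  have "prob (A n \<inter> G) = prob (A n)" for n
    using overlap A(1)[of n] by (intro finite_measure_eq_AE) (auto simp: G_def elim!: eventually_mono)
  then show ?thesis
    using A A_lim by (intro exI[of _ "\<lambda>n. A n \<inter> G"]) (auto simp: G_def)
qed

lemma (in prob_space) conv_in_prob_ipw_plug_in:
  fixes qh eh :: "nat \<Rightarrow> nat \<Rightarrow> 'a \<Rightarrow> real" and q z ee :: "nat \<Rightarrow> 'a \<Rightarrow> real"
  assumes [measurable]: "\<And>n i. qh n i \<in> borel_measurable M" "\<And>n i. eh n i \<in> borel_measurable M"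
      "\<And>i. q i \<in> borel_measurable M" "\<And>i. z i \<in> borel_measurable M"
    and ee_measurable[measurable]: "\<And>i. ee i \<in> borel_measurable M"
    and z: "\<And>i \<omega>. \<omega> \<in> space M \<Longrightarrow> \<bar>z i \<omega>\<bar> \<le> 1"
    and q: "\<And>i. integrable M (q i)" "\<And>i. expectation (\<lambda>\<omega>. \<bar>q i \<omega>\<bar>) \<le> C"
    and ipw_mean: "conv_in_prob M (\<lambda>n \<omega>. 1 / real n * (\<Sum>i<n. q i \<omega> * z i \<omega> / ee i \<omega>)) \<mu>"
    and risk: "conv_in_prob M (\<lambda>n \<omega>. 1 / real n * (\<Sum>i<n. (qh n i \<omega> - q i \<omega>)\<^sup>2)) 0"
    and "\<epsilon> > 0" and overlap: "AE \<omega> in M. \<forall>i. \<epsilon> \<le> ee i \<omega>"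
    and close: "\<And>h. h > 0 \<Longrightarrow> \<exists>A. (\<forall>n. A n \<in> events \<and>
        (\<forall>\<omega>\<in>A n. \<forall>i<n. \<bar>eh n i \<omega> - ee i \<omega>\<bar> \<le> h)) \<and> (\<lambda>n. prob (A n)) \<longlonglongrightarrow> 1"
  shows "conv_in_prob M (\<lambda>n \<omega>. 1 / real n * (\<Sum>i<n. qh n i \<omega> * z i \<omega> / eh n i \<omega>)) \<mu>"
proof -
  note close_overlap = close_events_under_overlap[OF ee_measurable overlap close]
  obtain A where A: "\<And>n. A n \<in> events" "(\<lambda>n. prob (A n)) \<longlonglongrightarrow> 1"
    and A_close: "\<And>n \<omega> i. \<omega> \<in> A n \<Longrightarrow> i < n \<Longrightarrow> \<epsilon> \<le> ee i \<omega> \<and> \<bar>eh n i \<omega> - ee i \<omega>\<bar> \<le> \<epsilon> / 2"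
    using close_overlap[of "\<epsilon> / 2"] \<open>\<epsilon> > 0\<close> by auto
  have "\<epsilon> / 2 \<le> eh n i \<omega>" if "\<omega> \<in> A n" "i < n" for n i \<omega>
    using A_close[OF that] by linarith
  then have numerator:
    "conv_in_prob M (\<lambda>n \<omega>. 1 / real n * (\<Sum>i<n. (qh n i \<omega> - q i \<omega>) * z i \<omega> / eh n i \<omega>)) 0"
    using z risk \<open>\<epsilon> > 0\<close> A by (intro conv_in_prob_numerator_error[where A=A and c="\<epsilon> / 2"]) auto
  have denominator:
    "conv_in_prob M (\<lambda>n \<omega>. 1 / real n * (\<Sum>i<n. q i \<omega> * z i \<omega> * (1 / eh n i \<omega> - 1 / ee i \<omega>))) 0"
    by (rule conv_in_prob_denominator_error[OF _ _ _ _ z q \<open>\<epsilon> > 0\<close> close_overlap]; measurable)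
  have "conv_in_prob M (\<lambda>n \<omega>. (1 / real n * (\<Sum>i<n. q i \<omega> * z i \<omega> / ee i \<omega>)
      + 1 / real n * (\<Sum>i<n. (qh n i \<omega> - q i \<omega>) * z i \<omega> / eh n i \<omega>))
      + 1 / real n * (\<Sum>i<n. q i \<omega> * z i \<omega> * (1 / eh n i \<omega> - 1 / ee i \<omega>))) (\<mu> + 0 + 0)"
  proof (rule conv_in_prob_add[OF conv_in_prob_add[OF ipw_mean numerator] denominator])
    show "(\<lambda>\<omega>. 1 / real n * (\<Sum>i<n. q i \<omega> * z i \<omega> / ee i \<omega>)) \<in> borel_measurable M" for n
      by measurable
    show "(\<lambda>\<omega>. 1 / real n * (\<Sum>i<n. (qh n i \<omega> - q i \<omega>) * z i \<omega> / eh n i \<omega>)) \<in> borel_measurable M" for n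
      by measurable
    show "(\<lambda>\<omega>. 1 / real n * (\<Sum>i<n. q i \<omega> * z i \<omega> * (1 / eh n i \<omega> - 1 / ee i \<omega>))) \<in> borel_measurable M" for n
      by measurable
    show "(\<lambda>\<omega>. 1 / real n * (\<Sum>i<n. q i \<omega> * z i \<omega> / ee i \<omega>) +
      1 / real n * (\<Sum>i<n. (qh n i \<omega> - q i \<omega>) * z i \<omega> / eh n i \<omega>)) \<in> borel_measurable M" for n
      by measurable
  qed
  moreover have "qh n i \<omega> * z i \<omega> / eh n i \<omega> = q i \<omega> * z i \<omega> / ee i \<omega>
      + (qh n i \<omega> - q i \<omega>) * z i \<omega> / eh n i \<omega> + q i \<omega> * z i \<omega> * (1 / eh n i \<omega> - 1 / ee i \<omega>)"
    for n i \<omega>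
    by (simp add: diff_divide_distrib right_diff_distrib left_diff_distrib)
  then have "(\<lambda>n \<omega>. 1 / real n * (\<Sum>i<n. qh n i \<omega> * z i \<omega> / eh n i \<omega>)) =
      (\<lambda>n \<omega>. (1 / real n * (\<Sum>i<n. q i \<omega> * z i \<omega> / ee i \<omega>)
      + 1 / real n * (\<Sum>i<n. (qh n i \<omega> - q i \<omega>) * z i \<omega> / eh n i \<omega>))
      + 1 / real n * (\<Sum>i<n. q i \<omega> * z i \<omega> * (1 / eh n i \<omega> - 1 / ee i \<omega>)))"
    by (intro ext) (simp only: sum.distrib distrib_left)
  ultimately show ?thesis by simp
qed

section \<open>Quantiles and the treatment model\<close>

lemma (in real_distribution) quantile_le_iff:
  assumes "0 < \<tau>" "\<tau> < 1"
  shows "quantile M \<tau> \<le> c \<longleftrightarrow> \<tau> \<le> cdf M c"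
proof -
  define S where "S = {y. \<tau> \<le> cdf M y}"
  have quantile: "quantile M \<tau> = Inf S"
    by (simp add: quantile_def S_def cdf_def2)
  have "eventually (\<lambda>y. \<tau> < cdf M y) at_top"
    using \<open>\<tau> < 1\<close> by (intro order_tendstoD(1)[OF cdf_lim_at_top_prob])
  then obtain y where "\<tau> < cdf M y" by (auto simp: eventually_at_top_linorder)
  then have "S \<noteq> {}" by (auto simp: S_def intro: less_imp_le)
  have "eventually (\<lambda>y. cdf M y < \<tau>) at_bot"
    using \<open>0 < \<tau>\<close> by (intro order_tendstoD(2)[OF cdf_lim_at_bot])
  then obtain b where b: "\<And>y. y \<le> b \<Longrightarrow> cdf M y < \<tau>" by (auto simp: eventually_at_bot_linorder)
  have "bdd_below S"
  proof (rule bdd_belowI)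
    fix s assume "s \<in> S"
    then show "b \<le> s" using b[of s] by (force simp: S_def)
  qed
  show ?thesis
  proof
    assume "quantile M \<tau> \<le> c"
    have "\<tau> \<le> cdf M d" if "c < d" for d
    proof -
      from \<open>quantile M \<tau> \<le> c\<close> \<open>c < d\<close> have "Inf S < d" by (simp add: quantile)
      then obtain s where "s \<in> S" "s < d" using cInf_less_iff[OF \<open>S \<noteq> {}\<close> \<open>bdd_below S\<close>] by auto
      then show ?thesis using cdf_nondecreasing[of s d] by (simp add: S_def)
    qed
    then have "eventually (\<lambda>d. \<tau> \<le> cdf M d) (at_right c)"
      by (auto simp: eventually_at_right_less eventually_at_right_field intro: exI[of _ "c + 1"])
    then show "\<tau> \<le> cdf M c"
      using cdf_is_right_cont[of c] by (intro tendsto_lowerbound) (auto simp: continuous_within)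
  next
    assume "\<tau> \<le> cdf M c"
    then show "quantile M \<tau> \<le> c"
      unfolding quantile using \<open>bdd_below S\<close> by (intro cInf_lower) (auto simp: S_def)
  qed
qed

text \<open>The quantile lies in a tail carrying mass at least \<open>min \<tau> (1 - \<tau>)\<close> on which \<open>y\<^sup>2\<close>
  dominates its square.\<close>

lemma (in real_distribution) quantile_square_le_second_moment:
  assumes "0 < \<tau>" "\<tau> < 1"
  shows "ennreal (min \<tau> (1 - \<tau>) * (quantile M \<tau>)\<^sup>2) \<le> (\<integral>\<^sup>+y. ennreal (y\<^sup>2) \<partial>M)"
proof -
  define q where "q = quantile M \<tau>"
  obtain A where A: "A \<in> sets borel" "min \<tau> (1 - \<tau>) \<le> prob A" "\<And>y. y \<in> A \<Longrightarrow> q\<^sup>2 \<le> y\<^sup>2"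
  proof (cases "q \<le> 0")
    case True
    have "\<tau> \<le> prob {..q}"
      using quantile_le_iff[OF assms, of q] by (simp add: q_def cdf_def2)
    moreover have "q\<^sup>2 \<le> y\<^sup>2" if "y \<in> {..q}" for y
      using that True by (simp add: abs_le_square_iff[symmetric])
    ultimately show ?thesis by (intro that[of "{..q}"]) auto
  next
    case False
    have "cdf M d \<le> \<tau>" if "d < q" for d
      using quantile_le_iff[OF assms, of d] that by (simp add: q_def)
    then have "prob {..<q} \<le> \<tau>"
      by (intro tendsto_upperbound[OF cdf_at_left])
        (auto simp: eventually_at_left_field intro: exI[of _ "q - 1"])
    then have "1 - \<tau> \<le> prob {q..}"
      using prob_compl[of "{..<q}"] by (simp add: Compl_eq_Diff_UNIV[symmetric] not_less)
    moreover have "q\<^sup>2 \<le> y\<^sup>2" if "y \<in> {q..}" for y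
      using that False by (intro power_mono) auto
    ultimately show ?thesis by (intro that[of "{q..}"]) auto
  qed
  have "ennreal (min \<tau> (1 - \<tau>) * q\<^sup>2) \<le> ennreal (q\<^sup>2) * emeasure M A"
    using A(2) by (simp add: emeasure_eq_measure ennreal_mult[symmetric] mult.commute mult_right_mono)
  also have "\<dots> = (\<integral>\<^sup>+y. ennreal (q\<^sup>2) * indicator A y \<partial>M)"
    using A(1) by (simp add: nn_integral_cmult_indicator)
  also have "\<dots> \<le> (\<integral>\<^sup>+y. ennreal (y\<^sup>2) \<partial>M)"
    using A(3) by (intro nn_integral_mono) (auto split: split_indicator intro: ennreal_leI)
  finally show ?thesis by (simp add: q_def)
qed

locale treatment_model = prob_space M
  for M :: "'a measure" and MX :: "'x measure" and X :: "'a \<Rightarrow> 'x" and Y Z :: "'a \<Rightarrow> real"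
    and e :: "'x \<Rightarrow> real" and \<kappa> :: "'x \<Rightarrow> real measure" and \<epsilon> :: real +
  assumes X_measurable[measurable]: "X \<in> M \<rightarrow>\<^sub>M MX"
    and Y_measurable[measurable]: "Y \<in> borel_measurable M"
    and Z_measurable[measurable]: "Z \<in> borel_measurable M"
    and Z_binary: "\<And>\<omega>. \<omega> \<in> space M \<Longrightarrow> Z \<omega> \<in> {0, 1}"
    and propensity: "is_propensity M MX X Z e"
    and kernel: "is_cond_dist_kernel M MX X Y Z \<kappa>"
    and overlap: "\<epsilon> > 0" "AE \<omega> in M. \<epsilon> \<le> e (X \<omega>) \<and> e (X \<omega>) \<le> 1 - \<epsilon>"
    and Y_square_integrable: "integrable M (\<lambda>\<omega>. (Y \<omega>)\<^sup>2)"
begin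

lemma propensity_measurable[measurable]: "e \<in> borel_measurable MX"
  using propensity by (simp add: is_propensity_def)

lemma kernel_measurable: "\<kappa> \<in> MX \<rightarrow>\<^sub>M prob_algebra borel"
  using kernel by (simp add: is_cond_dist_kernel_def)

lemma real_distribution_kernel: "x \<in> space MX \<Longrightarrow> real_distribution (\<kappa> x)"
  using measurable_space[OF kernel_measurable] by (auto simp: space_prob_algebra real_distribution_def
      real_distribution_axioms_def)

lemma measurable_cond_quantile:
  assumes "0 < \<tau>" "\<tau> < 1"
  shows "cond_quantile \<kappa> \<tau> \<in> borel_measurable MX"
proof (subst borel_measurable_iff_le, intro allI)
  fix c
  have cdf: "(\<lambda>x. measure (\<kappa> x) {..c}) \<in> borel_measurable MX"
    using measurable_compose[OF kernel_measurable measurable_measure_prob_algebra[of "{..c}" borel]] by simp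
  have "{x \<in> space MX. cond_quantile \<kappa> \<tau> x \<le> c} = {x \<in> space MX. \<tau> \<le> measure (\<kappa> x) {..c}}"
    using real_distribution.quantile_le_iff[OF real_distribution_kernel assms]
    by (auto simp: cond_quantile_def cdf_def2)
  also have "\<dots> \<in> sets MX" using cdf by measurable
  finally show "{x \<in> space MX. cond_quantile \<kappa> \<tau> x \<le> c} \<in> sets MX" .
qed

lemma AE_overlap: "AE \<omega> in M. 0 < e (X \<omega>) \<and> e (X \<omega>) \<le> 1" "AE \<omega> in M. \<epsilon> \<le> e (X \<omega>)"
  by (rule eventually_mono[OF overlap(2)], use overlap(1) in auto)+

lemma nn_integral_treated_eq_propensity:
  fixes g :: "'x \<Rightarrow> ennreal"
  assumes [measurable]: "g \<in> borel_measurable MX"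
  shows "(\<integral>\<^sup>+\<omega>. indicator {1} (Z \<omega>) * g (X \<omega>) \<partial>M) = (\<integral>\<^sup>+\<omega>. ennreal (e (X \<omega>)) * g (X \<omega>) \<partial>M)"
proof -
  define \<nu>1 where "\<nu>1 = distr (density M (\<lambda>\<omega>. indicator {1} (Z \<omega>))) MX X"
  define \<nu>2 where "\<nu>2 = distr (density M (\<lambda>\<omega>. ennreal (e (X \<omega>)))) MX X"
  have \<nu>: "\<nu>1 = \<nu>2"
  proof (rule measure_eqI)
    fix A assume "A \<in> sets \<nu>1"
    then have A[measurable]: "A \<in> sets MX" by (simp add: \<nu>1_def)
    have "integrable M (\<lambda>\<omega>. indicator (X -` A \<inter> space M) \<omega> * e (X \<omega>))"
    proof (rule integrable_const_bound[where B=1])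
      show "AE \<omega> in M. norm (indicator (X -` A \<inter> space M) \<omega> * e (X \<omega>)) \<le> 1"
        using AE_overlap(1) by eventually_elim (auto split: split_indicator)
    qed measurable
    moreover have "AE \<omega> in M. 0 \<le> indicator (X -` A \<inter> space M) \<omega> * e (X \<omega>)"
      using AE_overlap(1) by eventually_elim (auto split: split_indicator)
    ultimately have "ennreal (\<integral>\<omega>. indicator (X -` A \<inter> space M) \<omega> * e (X \<omega>) \<partial>M)
        = (\<integral>\<^sup>+\<omega>. ennreal (indicator (X -` A \<inter> space M) \<omega> * e (X \<omega>)) \<partial>M)"
      by (rule nn_integral_eq_integral[symmetric])
    moreover have "emeasure \<nu>1 A = ennreal (measure M {\<omega>\<in>space M. X \<omega> \<in> A \<and> Z \<omega> = 1})"
    proof -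
      have "emeasure \<nu>1 A = (\<integral>\<^sup>+\<omega>. indicator {1} (Z \<omega>) * indicator (X -` A \<inter> space M) \<omega> \<partial>M)"
        unfolding \<nu>1_def by (simp add: emeasure_distr emeasure_density)
      also have "\<dots> = (\<integral>\<^sup>+\<omega>. indicator {\<omega>\<in>space M. X \<omega> \<in> A \<and> Z \<omega> = 1} \<omega> \<partial>M)"
        by (intro nn_integral_cong) (auto split: split_indicator)
      finally show ?thesis by (simp add: emeasure_eq_measure)
    qed
    moreover have "emeasure \<nu>2 A = (\<integral>\<^sup>+\<omega>. ennreal (indicator (X -` A \<inter> space M) \<omega> * e (X \<omega>)) \<partial>M)"
      unfolding \<nu>2_def by (simp add: emeasure_distr emeasure_density)
        (intro nn_integral_cong, auto split: split_indicator)
    ultimately show "emeasure \<nu>1 A = emeasure \<nu>2 A"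
      using propensity A by (simp add: is_propensity_def)
  qed (simp add: \<nu>1_def \<nu>2_def)
  have "(\<integral>\<^sup>+\<omega>. indicator {1} (Z \<omega>) * g (X \<omega>) \<partial>M) = integral\<^sup>N \<nu>1 g"
    unfolding \<nu>1_def by (simp add: nn_integral_distr nn_integral_density)
  also have "\<dots> = (\<integral>\<^sup>+\<omega>. ennreal (e (X \<omega>)) * g (X \<omega>) \<partial>M)"
    unfolding \<nu> \<nu>2_def by (simp add: nn_integral_distr nn_integral_density)
  finally show ?thesis .
qed

lemma measurable_kernel_X: "(\<lambda>\<omega>. \<kappa> (X \<omega>)) \<in> M \<rightarrow>\<^sub>M subprob_algebra borel"
  using measurable_compose[OF X_measurable measurable_prob_algebraD[OF kernel_measurable]] by simp

lemma distr_treated_eq_bind_kernel: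
  "distr (density M (\<lambda>\<omega>. indicator {1} (Z \<omega>))) borel Y
    = density M (\<lambda>\<omega>. indicator {1} (Z \<omega>)) \<bind> (\<lambda>\<omega>. \<kappa> (X \<omega>))" (is "distr ?T borel Y = _")
proof (rule measure_eqI)
  have \<kappa>X_distribution: "\<omega> \<in> space M \<Longrightarrow> real_distribution (\<kappa> (X \<omega>))" for \<omega>
    using real_distribution_kernel measurable_space[OF X_measurable] by blast
  show "sets (distr ?T borel Y) = sets (?T \<bind> (\<lambda>\<omega>. \<kappa> (X \<omega>)))"
    using \<kappa>X_distribution not_empty
    by (subst sets_bind) (auto simp: real_distribution_def real_distribution_axioms_def)
  fix B assume "B \<in> sets (distr ?T borel Y)"
  then have B[measurable]: "B \<in> sets borel" by simp
  have \<kappa>B: "(\<lambda>\<omega>. measure (\<kappa> (X \<omega>)) B) \<in> borel_measurable M"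
    using measurable_compose[OF measurable_kernel_X measurable_measure_subprob_algebra[OF B]] by simp
  let ?f = "\<lambda>\<omega>. indicator (X -` space MX \<inter> space M) \<omega> * indicator {1} (Z \<omega>) * measure (\<kappa> (X \<omega>)) B"
  have "integrable M ?f"
    by (rule integrable_const_bound[where B=1]) (use \<kappa>B \<kappa>X_distribution in
        \<open>auto split: split_indicator intro!: prob_space.prob_le_1 simp: real_distribution_def\<close>)
  then have "ennreal (\<integral>\<omega>. ?f \<omega> \<partial>M) = (\<integral>\<^sup>+\<omega>. ennreal (?f \<omega>) \<partial>M)"
    by (rule nn_integral_eq_integral[symmetric]) auto
  moreover have "emeasure (distr ?T borel Y) B
      = ennreal (measure M {\<omega>\<in>space M. X \<omega> \<in> space MX \<and> Z \<omega> = 1 \<and> Y \<omega> \<in> B})"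
  proof -
    have "emeasure (distr ?T borel Y) B = (\<integral>\<^sup>+\<omega>. indicator {1} (Z \<omega>) * indicator (Y -` B \<inter> space M) \<omega> \<partial>M)"
      by (simp add: emeasure_distr emeasure_density)
    also have "\<dots> = (\<integral>\<^sup>+\<omega>. indicator {\<omega>\<in>space M. X \<omega> \<in> space MX \<and> Z \<omega> = 1 \<and> Y \<omega> \<in> B} \<omega> \<partial>M)"
      using measurable_space[OF X_measurable] by (intro nn_integral_cong) (auto split: split_indicator)
    finally show ?thesis by (simp add: emeasure_eq_measure)
  qed
  moreover have "(\<integral>\<^sup>+\<omega>. ennreal (?f \<omega>) \<partial>M) = emeasure (?T \<bind> (\<lambda>\<omega>. \<kappa> (X \<omega>))) B"
  proof -
    have "(\<integral>\<^sup>+\<omega>. ennreal (?f \<omega>) \<partial>M) = (\<integral>\<^sup>+\<omega>. indicator {1} (Z \<omega>) * emeasure (\<kappa> (X \<omega>)) B \<partial>M)"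
      using measurable_space[OF X_measurable] \<kappa>X_distribution
      by (intro nn_integral_cong) (auto split: split_indicator
          simp: finite_measure.emeasure_eq_measure real_distribution_def prob_space_def)
    also have "\<dots> = emeasure (?T \<bind> (\<lambda>\<omega>. \<kappa> (X \<omega>))) B"
      using not_empty measurable_kernel_X B
      by (subst emeasure_bind[where N=borel]) (auto simp: nn_integral_density)
    finally show ?thesis .
  qed
  ultimately show "emeasure (distr ?T borel Y) B = emeasure (?T \<bind> (\<lambda>\<omega>. \<kappa> (X \<omega>))) B"
    using kernel B by (simp add: is_cond_dist_kernel_def)
qed

lemma nn_integral_treated_eq_kernel:
  fixes h :: "real \<Rightarrow> ennreal"
  assumes [measurable]: "h \<in> borel_measurable borel"
  shows "(\<integral>\<^sup>+\<omega>. indicator {1} (Z \<omega>) * h (Y \<omega>) \<partial>M)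
    = (\<integral>\<^sup>+\<omega>. indicator {1} (Z \<omega>) * (\<integral>\<^sup>+y. h y \<partial>\<kappa> (X \<omega>)) \<partial>M)"
proof -
  define T where "T = density M (\<lambda>\<omega>. indicator {1} (Z \<omega>))"
  have \<kappa>X_T: "(\<lambda>\<omega>. \<kappa> (X \<omega>)) \<in> T \<rightarrow>\<^sub>M subprob_algebra borel"
    using measurable_kernel_X by (simp add: T_def measurable_cong_sets[OF sets_density refl])
  have "(\<integral>\<^sup>+\<omega>. indicator {1} (Z \<omega>) * h (Y \<omega>) \<partial>M) = integral\<^sup>N (distr T borel Y) h"
    unfolding T_def by (simp add: nn_integral_distr nn_integral_density)
  also have "\<dots> = (\<integral>\<^sup>+\<omega>. (\<integral>\<^sup>+y. h y \<partial>\<kappa> (X \<omega>)) \<partial>T)"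
    unfolding T_def distr_treated_eq_bind_kernel by (rule nn_integral_bind[OF _ \<kappa>X_T[unfolded T_def]]) simp
  also have "\<dots> = (\<integral>\<^sup>+\<omega>. indicator {1} (Z \<omega>) * (\<integral>\<^sup>+y. h y \<partial>\<kappa> (X \<omega>)) \<partial>M)"
    unfolding T_def using measurable_kernel_X by (subst nn_integral_density) auto
  finally show ?thesis .
qed

text \<open>Overlap converts the second moment of \<open>Y\<close> on the treated into a bound on the conditional
  second moment of \<open>Y\<close> given \<open>X\<close>, which dominates the squared conditional quantile.\<close>

lemma integrable_cond_quantile_square:
  assumes "0 < \<tau>" "\<tau> < 1"
  shows "integrable M (\<lambda>\<omega>. (cond_quantile \<kappa> \<tau> (X \<omega>))\<^sup>2)"
proof -
  define q where "q = cond_quantile \<kappa> \<tau>"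
  define c where "c = min \<tau> (1 - \<tau>)"
  define m2 where "m2 x = (\<integral>\<^sup>+y. ennreal (y\<^sup>2) \<partial>\<kappa> x)" for x
  have [measurable]: "q \<in> borel_measurable MX"
    unfolding q_def by (rule measurable_cond_quantile[OF assms])
  have [measurable]: "m2 \<in> borel_measurable MX"
    unfolding m2_def using measurable_compose[OF measurable_prob_algebraD[OF kernel_measurable]
        nn_integral_measurable_subprob_algebra[of "\<lambda>y. ennreal (y\<^sup>2)" borel]] by simp
  have "c > 0" using assms by (simp add: c_def)
  have "ennreal (\<epsilon> * c) * (\<integral>\<^sup>+\<omega>. ennreal ((q (X \<omega>))\<^sup>2) \<partial>M) = (\<integral>\<^sup>+\<omega>. ennreal \<epsilon> * ennreal (c * (q (X \<omega>))\<^sup>2) \<partial>M)"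
    using overlap(1) \<open>c > 0\<close> by (simp add: nn_integral_cmult[symmetric] ennreal_mult[symmetric] ac_simps)
  also have "\<dots> \<le> (\<integral>\<^sup>+\<omega>. ennreal (e (X \<omega>)) * m2 (X \<omega>) \<partial>M)"
  proof (intro nn_integral_mono_AE)
    show "AE \<omega> in M. ennreal \<epsilon> * ennreal (c * (q (X \<omega>))\<^sup>2) \<le> ennreal (e (X \<omega>)) * m2 (X \<omega>)"
      using AE_overlap(2) AE_space
    proof eventually_elim
      case (elim \<omega>)
      then have "real_distribution (\<kappa> (X \<omega>))"
        using real_distribution_kernel measurable_space[OF X_measurable] by blast
      then have "ennreal (c * (q (X \<omega>))\<^sup>2) \<le> m2 (X \<omega>)"
        using real_distribution.quantile_square_le_second_moment[OF _ assms]
        by (simp add: c_def q_def m2_def cond_quantile_def)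
      then show ?case using elim by (intro mult_mono ennreal_leI) auto
    qed
  qed
  also have "\<dots> = (\<integral>\<^sup>+\<omega>. indicator {1} (Z \<omega>) * ennreal ((Y \<omega>)\<^sup>2) \<partial>M)"
    using nn_integral_treated_eq_propensity[of m2] nn_integral_treated_eq_kernel[of "\<lambda>y. ennreal (y\<^sup>2)"]
    by (simp add: m2_def)
  also have "\<dots> \<le> (\<integral>\<^sup>+\<omega>. ennreal ((Y \<omega>)\<^sup>2) \<partial>M)"
    by (intro nn_integral_mono) (auto split: split_indicator)
  also have "\<dots> < \<infinity>"
    using nn_integral_eq_integral[OF Y_square_integrable] by simp
  finally have "(\<integral>\<^sup>+\<omega>. ennreal ((q (X \<omega>))\<^sup>2) \<partial>M) < \<infinity>"
    using overlap(1) \<open>c > 0\<close> by (auto simp: ennreal_mult_less_top)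
  then show ?thesis
    unfolding q_def[symmetric] by (intro integrableI_nonneg) auto
qed

lemma AE_ipw_abs_le: "AE \<omega> in M. \<bar>q (X \<omega>) * Z \<omega> / e (X \<omega>)\<bar> \<le> \<bar>q (X \<omega>)\<bar> / \<epsilon>"
  using AE_overlap(2) AE_space
proof eventually_elim
  case (elim \<omega>)
  then have "\<bar>Z \<omega>\<bar> \<le> 1" "\<epsilon> \<le> e (X \<omega>)" using Z_binary[of \<omega>] by auto
  then have "\<bar>q (X \<omega>)\<bar> * \<bar>Z \<omega>\<bar> / e (X \<omega>) \<le> \<bar>q (X \<omega>)\<bar> / \<epsilon>"
    using overlap(1) by (intro frac_le mult_right_le_one_le) auto
  then show ?case using overlap(1) \<open>\<epsilon> \<le> e (X \<omega>)\<close> by (simp add: abs_mult)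
qed

lemma integrable_ipw_square:
  assumes [measurable]: "q \<in> borel_measurable MX" and "integrable M (\<lambda>\<omega>. (q (X \<omega>))\<^sup>2)"
  shows "integrable M (\<lambda>\<omega>. (q (X \<omega>) * Z \<omega> / e (X \<omega>))\<^sup>2)"
proof (rule Bochner_Integration.integrable_bound)
  show "integrable M (\<lambda>\<omega>. (q (X \<omega>))\<^sup>2 / \<epsilon>\<^sup>2)" using assms(2) by simp
  show "AE \<omega> in M. norm ((q (X \<omega>) * Z \<omega> / e (X \<omega>))\<^sup>2) \<le> norm ((q (X \<omega>))\<^sup>2 / \<epsilon>\<^sup>2)"
    using AE_ipw_abs_le[of q]
  proof eventually_elim
    case (elim \<omega>)
    then have "\<bar>q (X \<omega>) * Z \<omega> / e (X \<omega>)\<bar>\<^sup>2 \<le> (\<bar>q (X \<omega>)\<bar> / \<epsilon>)\<^sup>2"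
      by (intro power_mono) auto
    then show ?case by (simp add: power_divide)
  qed
qed measurable

lemma integral_ipw:
  assumes [measurable]: "q \<in> borel_measurable MX" and q_integrable: "integrable M (\<lambda>\<omega>. q (X \<omega>))"
  shows "expectation (\<lambda>\<omega>. q (X \<omega>) * Z \<omega> / e (X \<omega>)) = expectation (\<lambda>\<omega>. q (X \<omega>))"
proof -
  have ipw_integrable: "integrable M (\<lambda>\<omega>. q (X \<omega>) * Z \<omega> / e (X \<omega>))"
  proof (rule Bochner_Integration.integrable_bound)
    show "integrable M (\<lambda>\<omega>. \<bar>q (X \<omega>)\<bar> / \<epsilon>)" using q_integrable by simp
    show "AE \<omega> in M. norm (q (X \<omega>) * Z \<omega> / e (X \<omega>)) \<le> norm (\<bar>q (X \<omega>)\<bar> / \<epsilon>)"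
      using AE_ipw_abs_le[of q] by eventually_elim (use overlap(1) in simp)
  qed measurable
  have parts: "(\<integral>\<^sup>+\<omega>. ennreal (s * (q (X \<omega>) * Z \<omega> / e (X \<omega>))) \<partial>M) = (\<integral>\<^sup>+\<omega>. ennreal (s * q (X \<omega>)) \<partial>M)"
    for s :: real
  proof -
    have "(\<integral>\<^sup>+\<omega>. ennreal (s * (q (X \<omega>) * Z \<omega> / e (X \<omega>))) \<partial>M)
        = (\<integral>\<^sup>+\<omega>. indicator {1} (Z \<omega>) * ennreal (s * q (X \<omega>) / e (X \<omega>)) \<partial>M)"
      using Z_binary by (intro nn_integral_cong) (force split: split_indicator)
    also have "\<dots> = (\<integral>\<^sup>+\<omega>. ennreal (e (X \<omega>)) * ennreal (s * q (X \<omega>) / e (X \<omega>)) \<partial>M)"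
      by (rule nn_integral_treated_eq_propensity) measurable
    also have "\<dots> = (\<integral>\<^sup>+\<omega>. ennreal (s * q (X \<omega>)) \<partial>M)"
      using AE_overlap(1) by (intro nn_integral_cong_AE, eventually_elim)
        (simp add: ennreal_mult'[symmetric])
    finally show ?thesis .
  qed
  show ?thesis
    using parts[of 1] parts[of "-1"]
    by (simp add: real_lebesgue_integral_def[OF ipw_integrable] real_lebesgue_integral_def[OF q_integrable])
qed

end

section \<open>The cross-fitted sample\<close>

locale iid_treatment_sample = prob_space M
  for M :: "'a measure" and MX :: "'x measure" and X :: "nat \<Rightarrow> 'a \<Rightarrow> 'x" and Y Z :: "nat \<Rightarrow> 'a \<Rightarrow> real"
    and e :: "'x \<Rightarrow> real" and \<kappa> :: "'x \<Rightarrow> real measure" and \<epsilon> :: real +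
  assumes sample_measurable: "\<And>i. (\<lambda>\<omega>. (X i \<omega>, Y i \<omega>, Z i \<omega>)) \<in> M \<rightarrow>\<^sub>M MX \<Otimes>\<^sub>M borel \<Otimes>\<^sub>M borel"
    and sample_indep: "indep_vars (\<lambda>_. MX \<Otimes>\<^sub>M borel \<Otimes>\<^sub>M borel) (\<lambda>i \<omega>. (X i \<omega>, Y i \<omega>, Z i \<omega>)) UNIV"
    and sample_ident: "\<And>i. distr M (MX \<Otimes>\<^sub>M borel \<Otimes>\<^sub>M borel) (\<lambda>\<omega>. (X i \<omega>, Y i \<omega>, Z i \<omega>))
      = distr M (MX \<Otimes>\<^sub>M borel \<Otimes>\<^sub>M borel) (\<lambda>\<omega>. (X 0 \<omega>, Y 0 \<omega>, Z 0 \<omega>))"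
    and sample_binary: "\<And>i \<omega>. \<omega> \<in> space M \<Longrightarrow> Z i \<omega> \<in> {0, 1}"
    and sample_propensity: "is_propensity M MX (X 0) (Z 0) e"
    and sample_kernel: "is_cond_dist_kernel M MX (X 0) (Y 0) (Z 0) \<kappa>"
    and sample_overlap: "\<epsilon> > 0" "AE \<omega> in M. \<epsilon> \<le> e (X 0 \<omega>) \<and> e (X 0 \<omega>) \<le> 1 - \<epsilon>"
    and sample_Y_square_integrable: "integrable M (\<lambda>\<omega>. (Y 0 \<omega>)\<^sup>2)"
begin

lemma measurable_X[measurable]: "X i \<in> M \<rightarrow>\<^sub>M MX"
  and measurable_Y[measurable]: "Y i \<in> borel_measurable M"
  and measurable_Z[measurable]: "Z i \<in> borel_measurable M"
  using measurable_compose[OF sample_measurable measurable_fst]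
    measurable_compose[OF sample_measurable measurable_snd]
  by (auto dest: measurable_Pair_compose_split)

lemma distr_X: "distr M MX (X i) = distr M MX (X 0)"
  using distr_iid_comp[OF sample_measurable sample_indep sample_ident measurable_fst, of i] by simp

sublocale first: treatment_model M MX "X 0" "Y 0" "Z 0" e \<kappa> \<epsilon>
  using sample_binary sample_propensity sample_kernel sample_overlap sample_Y_square_integrable
  by unfold_locales auto

lemma AE_overlap_sample: "AE \<omega> in M. \<forall>i. \<epsilon> \<le> e (X i \<omega>)"
proof -
  have "AE \<omega> in M. \<epsilon> \<le> e (X i \<omega>)" for i
    using first.AE_overlap(2) AE_eq_if_distr_eq[OF distr_X[of i] measurable_X measurable_X,
        of "\<lambda>x. \<epsilon> \<le> e x"] by simp
  then show ?thesis by (simp add: AE_all_countable)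
qed

lemma conv_in_prob_cross_fit_risk_sample:
  fixes Qhat :: "nat \<Rightarrow> nat \<Rightarrow> 'a \<Rightarrow> 'x \<Rightarrow> real" and fold :: "nat \<Rightarrow> nat \<Rightarrow> nat"
  assumes [measurable]: "q \<in> borel_measurable MX" and fold_range: "\<And>n i. i < n \<Longrightarrow> fold n i < K"
    and Qhat_meas: "\<And>n k. k < K \<Longrightarrow> (\<lambda>(\<omega>, x). Qhat n k \<omega> x) \<in> borel_measurable
      (gen_sigma M (\<lambda>i \<omega>. (X i \<omega>, Y i \<omega>, Z i \<omega>)) (MX \<Otimes>\<^sub>M borel \<Otimes>\<^sub>M borel) {i. i < n \<and> fold n i \<noteq> k} \<Otimes>\<^sub>M MX)"
    and Qhat_L2: "\<And>k \<delta>. k < K \<Longrightarrow> \<delta> > 0 \<Longrightarrow> (\<lambda>n. prob {\<omega>\<in>space M. ennreal \<delta> <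
      (\<integral>\<^sup>+x. ennreal ((Qhat n k \<omega> x - q x)\<^sup>2) \<partial>distr M MX (X 0))}) \<longlonglongrightarrow> 0"
  shows "conv_in_prob M (\<lambda>n \<omega>. 1 / real n * (\<Sum>i<n. (Qhat n (fold n i) \<omega> (X i \<omega>) - q (X i \<omega>))\<^sup>2)) 0"
proof -
  have "conv_in_prob M (\<lambda>n \<omega>. 1 / real n *
      (\<Sum>i<n. (\<lambda>n k \<omega> x. (Qhat n k \<omega> x - q x)\<^sup>2) n (fold n i) \<omega> (fst (X i \<omega>, Y i \<omega>, Z i \<omega>)))) 0"
  proof (rule conv_in_prob_cross_fit_risk[OF sample_measurable sample_indep measurable_fst _ fold_range])
    show "(\<lambda>(\<omega>, x). (Qhat n k \<omega> x - q x)\<^sup>2) \<in> borel_measurable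
        (gen_sigma M (\<lambda>i \<omega>. (X i \<omega>, Y i \<omega>, Z i \<omega>)) (MX \<Otimes>\<^sub>M borel \<Otimes>\<^sub>M borel) {i. i < n \<and> fold n i \<noteq> k} \<Otimes>\<^sub>M MX)"
      if "k < K" for n k
      using Qhat_meas[OF that] by measurable
  qed (use distr_X Qhat_L2 in auto)
  then show ?thesis by simp
qed

lemma conv_in_prob_ipw_sample_mean:
  assumes [measurable]: "q \<in> borel_measurable MX" and "integrable M (\<lambda>\<omega>. (q (X 0 \<omega>))\<^sup>2)"
  shows "conv_in_prob M (\<lambda>n \<omega>. 1 / real n * (\<Sum>i<n. q (X i \<omega>) * Z i \<omega> / e (X i \<omega>))) (\<integral>\<omega>. q (X 0 \<omega>) \<partial>M)"
proof -
  define g :: "'x \<times> real \<times> real \<Rightarrow> real" where "g = (\<lambda>(x, y, z). q x * z / e x)"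
  have g: "g \<in> MX \<Otimes>\<^sub>M borel \<Otimes>\<^sub>M borel \<rightarrow>\<^sub>M borel" unfolding g_def by measurable
  have "integrable M (\<lambda>\<omega>. q (X 0 \<omega>))"
    by (rule square_integrable_imp_integrable[OF _ assms(2)]) measurable
  moreover have "conv_in_prob M (\<lambda>n \<omega>. 1 / real n * (\<Sum>i<n. g (X i \<omega>, Y i \<omega>, Z i \<omega>)))
      (\<integral>\<omega>. g (X 0 \<omega>, Y 0 \<omega>, Z 0 \<omega>) \<partial>M)"
    using first.integrable_ipw_square[OF assms]
    by (intro conv_in_prob_sample_mean indep_vars_iid_comp[OF sample_measurable sample_indep sample_ident g]
        distr_iid_comp[OF sample_measurable sample_indep sample_ident g]) (simp add: g_def)
  ultimately show ?thesis
    using first.integral_ipw[OF assms(1)] by (simp add: g_def)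
qed

lemma conv_in_prob_cross_fit_ipw:
  fixes qh :: "nat \<Rightarrow> nat \<Rightarrow> 'a \<Rightarrow> real" and ehat :: "nat \<Rightarrow> 'a \<Rightarrow> 'x \<Rightarrow> real"
  assumes q[measurable]: "q \<in> borel_measurable MX" and q_L2: "integrable M (\<lambda>\<omega>. (q (X 0 \<omega>))\<^sup>2)"
    and qh: "\<And>n i. i < n \<Longrightarrow> qh n i \<in> borel_measurable M"
    and risk: "conv_in_prob M (\<lambda>n \<omega>. 1 / real n * (\<Sum>i<n. (qh n i \<omega> - q (X i \<omega>))\<^sup>2)) 0"
    and ehat[measurable]: "\<And>n i. (\<lambda>\<omega>. ehat n \<omega> (X i \<omega>)) \<in> borel_measurable M"
    and ehat_unif: "\<And>\<delta>. \<delta> > 0 \<Longrightarrow> \<exists>A. (\<forall>n. A n \<in> sets M \<and>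
      (\<forall>\<omega>\<in>A n. \<forall>x\<in>space MX. \<bar>ehat n \<omega> x - e x\<bar> \<le> \<delta>)) \<and> (\<lambda>n. measure M (A n)) \<longlonglongrightarrow> 1"
  shows "conv_in_prob M (\<lambda>n \<omega>. 1 / real n * (\<Sum>i<n. qh n i \<omega> * Z i \<omega> / ehat n \<omega> (X i \<omega>)))
    (\<integral>\<omega>. q (X 0 \<omega>) \<partial>M)"
proof -
  \<comment> \<open>\<open>qh n i\<close> is only meaningful, and only assumed measurable, for \<open>i < n\<close>.\<close>
  define qh' where "qh' n i = (if i < n then qh n i else (\<lambda>_. 0))" for n i
  have "integrable M (\<lambda>\<omega>. q (X 0 \<omega>))"
    by (rule square_integrable_imp_integrable[OF _ q_L2]) measurable
  then have q_L1: "integrable M (\<lambda>\<omega>. q (X i \<omega>))" for i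
    using integrable_eq_if_distr_eq[OF distr_X[of i] measurable_X measurable_X q] by simp
  have "conv_in_prob M (\<lambda>n \<omega>. 1 / real n * (\<Sum>i<n. qh' n i \<omega> * Z i \<omega> / ehat n \<omega> (X i \<omega>)))
      (\<integral>\<omega>. q (X 0 \<omega>) \<partial>M)"
  proof (rule conv_in_prob_ipw_plug_in[where q="\<lambda>i \<omega>. q (X i \<omega>)" and ee="\<lambda>i \<omega>. e (X i \<omega>)"
        and C="\<integral>\<omega>. \<bar>q (X 0 \<omega>)\<bar> \<partial>M", OF _ _ _ _ _ _ q_L1 _ conv_in_prob_ipw_sample_mean[OF q q_L2]
        _ first.overlap(1) AE_overlap_sample])
    show "qh' n i \<in> borel_measurable M" for n i
      using qh by (simp add: qh'_def)
    show "\<bar>Z i \<omega>\<bar> \<le> 1" if "\<omega> \<in> space M" for i \<omega>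
      using sample_binary[OF that, of i] by auto
    show "(\<integral>\<omega>. \<bar>q (X i \<omega>)\<bar> \<partial>M) \<le> (\<integral>\<omega>. \<bar>q (X 0 \<omega>)\<bar> \<partial>M)" for i
      using integral_eq_if_distr_eq[OF distr_X[of i] measurable_X measurable_X, of "\<lambda>x. \<bar>q x\<bar>"] by simp
    show "conv_in_prob M (\<lambda>n \<omega>. 1 / real n * (\<Sum>i<n. (qh' n i \<omega> - q (X i \<omega>))\<^sup>2)) 0"
      using risk by (simp add: qh'_def)
    show "\<exists>A. (\<forall>n. A n \<in> events \<and> (\<forall>\<omega>\<in>A n. \<forall>i<n. \<bar>ehat n \<omega> (X i \<omega>) - e (X i \<omega>)\<bar> \<le> h))
        \<and> (\<lambda>n. prob (A n)) \<longlonglongrightarrow> 1" if "h > 0" for h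
      using ehat_unif[OF that] measurable_space[OF measurable_X] sets.sets_into_space by (metis subsetD)
  qed measurable
  then show ?thesis by (simp add: qh'_def)
qed

end

theorem lemma4:
  fixes M :: "'a measure" and MX :: "'x measure"
    and X :: "nat \<Rightarrow> 'a \<Rightarrow> 'x" and Y Z :: "nat \<Rightarrow> 'a \<Rightarrow> real"
    and e :: "'x \<Rightarrow> real" and \<kappa> :: "'x \<Rightarrow> real measure" and \<tau> \<epsilon> :: real
    and K :: nat and fold :: "nat \<Rightarrow> nat \<Rightarrow> nat"
    and Qhat :: "nat \<Rightarrow> nat \<Rightarrow> 'a \<Rightarrow> 'x \<Rightarrow> real"
    and ehat :: "nat \<Rightarrow> 'a \<Rightarrow> 'x \<Rightarrow> real"
  defines "W \<equiv> (\<lambda>i \<omega>. (X i \<omega>, Y i \<omega>, Z i \<omega>))"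
    and "WXZ \<equiv> (\<lambda>i \<omega>. (X i \<omega>, Z i \<omega>))"
    and "Q \<equiv> cond_quantile \<kappa> \<tau>"
  assumes M: "prob_space M"
    \<comment> \<open>i.i.d. sample (X_i, Y_i, Z_i), Z_i in {0,1}\<close>
    and W_meas: "\<And>i. W i \<in> M \<rightarrow>\<^sub>M (MX \<Otimes>\<^sub>M borel \<Otimes>\<^sub>M borel)"
    and W_indep: "prob_space.indep_vars M (\<lambda>_. MX \<Otimes>\<^sub>M borel \<Otimes>\<^sub>M borel) W UNIV"
    and W_ident: "\<And>i. distr M (MX \<Otimes>\<^sub>M borel \<Otimes>\<^sub>M borel) (W i) = distr M (MX \<Otimes>\<^sub>M borel \<Otimes>\<^sub>M borel) (W 0)"
    and Z_bin: "\<And>i \<omega>. \<omega> \<in> space M \<Longrightarrow> Z i \<omega> \<in> {0, 1}"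
    \<comment> \<open>propensity score and conditional tau-quantile\<close>
    and e_prop: "is_propensity M MX (X 0) (Z 0) e"
    and tau: "0 < \<tau>" "\<tau> < 1"
    and kappa: "is_cond_dist_kernel M MX (X 0) (Y 0) (Z 0) \<kappa>"
    \<comment> \<open>Condition 1\<close>
    and eps: "\<epsilon> > 0" "AE \<omega> in M. \<epsilon> \<le> e (X 0 \<omega>) \<and> e (X 0 \<omega>) \<le> 1 - \<epsilon>"
    and ehat_meas: "\<And>n. (\<lambda>(\<omega>, x). ehat n \<omega> x)
         \<in> borel_measurable (gen_sigma M WXZ (MX \<Otimes>\<^sub>M borel) {..<n} \<Otimes>\<^sub>M MX)"
    and ehat_unif: "\<And>\<delta>. \<delta> > 0 \<Longrightarrow> \<exists>A. (\<forall>n. A n \<in> sets M \<and>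
         (\<forall>\<omega>\<in>A n. \<forall>x\<in>space MX. \<bar>ehat n \<omega> x - e x\<bar> \<le> \<delta>)) \<and> (\<lambda>n. measure M (A n)) \<longlonglongrightarrow> 1"
    and Y_var: "integrable M (\<lambda>\<omega>. (Y 0 \<omega>)\<^sup>2)"
    \<comment> \<open>cross-fitting folds of approximately equal size\<close>
    and K: "K > 0"
    and fold_range: "\<And>n i. i < n \<Longrightarrow> fold n i < K"
    and fold_size: "\<And>k. k < K \<Longrightarrow>
         (\<lambda>n. real (card {i. i < n \<and> fold n i = k}) / real n) \<longlonglongrightarrow> 1 / real K"
    \<comment> \<open>Qhat_{-k} uses only observations outside fold k\<close>
    and Qhat_meas: "\<And>n k. k < K \<Longrightarrow> (\<lambda>(\<omega>, x). Qhat n k \<omega> x)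
         \<in> borel_measurable (gen_sigma M W (MX \<Otimes>\<^sub>M borel \<Otimes>\<^sub>M borel) {i. i < n \<and> fold n i \<noteq> k} \<Otimes>\<^sub>M MX)"
    \<comment> \<open>L2(P) consistency in probability of each Qhat_{-k} (squared norm)\<close>
    and Qhat_L2: "\<And>k \<delta>. k < K \<Longrightarrow> \<delta> > 0 \<Longrightarrow>
         (\<lambda>n. measure M {\<omega>\<in>space M. ennreal \<delta> <
            (\<integral>\<^sup>+ x. ennreal ((Qhat n k \<omega> x - Q x)\<^sup>2) \<partial>(distr M MX (X 0)))}) \<longlonglongrightarrow> 0"
  shows "conv_in_prob M (\<lambda>n \<omega>. sqrt ((1 / real n) *
            (\<Sum>i<n. (Qhat n (fold n i) \<omega> (X i \<omega>) - Q (X i \<omega>))\<^sup>2))) 0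
       \<and> conv_in_prob M (\<lambda>n \<omega>. (1 / real n) *
            (\<Sum>i<n. Qhat n (fold n i) \<omega> (X i \<omega>) * Z i \<omega> / ehat n \<omega> (X i \<omega>)))
            (\<integral>\<omega>. Q (X 0 \<omega>) \<partial>M)"
proof -
  interpret iid_treatment_sample M MX X Y Z e \<kappa> \<epsilon>
    using M W_meas W_indep W_ident Z_bin e_prop kappa eps Y_var unfolding W_def
    by (intro iid_treatment_sample.intro iid_treatment_sample_axioms.intro) auto
  have Q[measurable]: "Q \<in> borel_measurable MX"
    unfolding Q_def by (rule first.measurable_cond_quantile[OF tau])
  have risk: "conv_in_prob M (\<lambda>n \<omega>. 1 / real n * (\<Sum>i<n. (Qhat n (fold n i) \<omega> (X i \<omega>) - Q (X i \<omega>))\<^sup>2)) 0"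
    using Q fold_range Qhat_meas Qhat_L2 unfolding W_def by (rule conv_in_prob_cross_fit_risk_sample)
  show ?thesis
  proof
    show "conv_in_prob M (\<lambda>n \<omega>. sqrt ((1 / real n) *
        (\<Sum>i<n. (Qhat n (fold n i) \<omega> (X i \<omega>) - Q (X i \<omega>))\<^sup>2))) 0"
      using conv_in_prob_sqrt[OF risk] by (simp add: sum_nonneg)
    show "conv_in_prob M (\<lambda>n \<omega>. (1 / real n) *
        (\<Sum>i<n. Qhat n (fold n i) \<omega> (X i \<omega>) * Z i \<omega> / ehat n \<omega> (X i \<omega>))) (\<integral>\<omega>. Q (X 0 \<omega>) \<partial>M)"
    proof (rule conv_in_prob_cross_fit_ipw[OF Q _ _ risk _ ehat_unif])
      show "integrable M (\<lambda>\<omega>. (Q (X 0 \<omega>))\<^sup>2)"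
        unfolding Q_def by (rule first.integrable_cond_quantile_square[OF tau])
      show "(\<lambda>\<omega>. Qhat n (fold n i) \<omega> (X i \<omega>)) \<in> borel_measurable M" if "i < n" for n i
        using Qhat_meas[OF fold_range[OF that]] unfolding W_def
        by (rule measurable_gen_sigma_comp[OF sample_measurable _ measurable_X])
      have "WXZ i \<in> M \<rightarrow>\<^sub>M MX \<Otimes>\<^sub>M borel" for i
        unfolding WXZ_def by measurable
      then show "(\<lambda>\<omega>. ehat n \<omega> (X i \<omega>)) \<in> borel_measurable M" for n i
        by (rule measurable_gen_sigma_comp[OF _ ehat_meas measurable_X])
    qed
  qed
qed

end
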